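(* Let $r,s\ge 0$, let $\Delta=(v_1,\dots,v_n)$ be a collection of vectors in $\mathbb{Z}^2\setminus\{0\}$, let $F\subset\{1,\dots,n\}$ with $r+2s+|F|=|\Delta|-1$, and let $\mathcal{P}$ be a collection of conditions in general position for $\mathrm{ev}_F$. Then the forgetful map $\mathrm{ft}:\mathcal{M}^{or}_{(r,s)}(\Delta,F)\to\mathcal{M}_{(r,s)}(\Delta)$ (forgetting orientations) restricts to a bijection between the oriented refined broccoli curves in $\mathcal{M}^{or}_{(r,s)}(\Delta,F)$ with $\mathrm{ev}_F(C)=\mathcal{P}$ and the unoriented refined broccoli curves in $\mathcal{M}_{(r,s)}(\Delta)$ with $\mathrm{ev}_F(C)=\mathcal{P}$.
   Context: Curves. An $(r,s)$-marked curve of degree $\Delta$ is $C=(\Gamma,h,x_1,\dots,x_{r+s})$ with $\Gamma$ a metric graph whose components are trees, $h:\Gamma\to\mathbb{R}^2$ continuous, affine with integral direction vectors on edges, balanced at vertices; $x_1,\dots,x_r$ (real) and $x_{r+1},\dots,x_{r+s}$ (complex) are contracted unbounded edges (markings), the other unbounded edges $y_1,\dots,y_n$ (labeled ends) have outward direction vectors $\Delta=(v(y_1),\dots,v(y_n))$. $\mathcal{M}_{(r,s)}(\Delta)$ is the polyhedral complex of isomorphism classes of connected such curves (cells = combinatorial types). An oriented curve carries an orientation of every non-contracted edge; its set of fixed ends is $F=\{i:y_i\text{ oriented inwards}\}$; $\mathcal{M}^{or}_{(r,s)}(\Delta,F)$ is the set of connected oriented curves with set of fixed ends $F$. $\mathrm{ev}_F(C)=(h(x_1),\dots,h(x_{r+s}),(h(y_i))_{i\in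 F})\in(\mathbb{R}^2)^{r+s}\times\prod_{i\in F}\mathbb{R}^2/\langle v(y_i)\rangle$; $\mathcal P$ is in general position for $\mathrm{ev}_F$ (on $\mathcal{M}_{(r,s)}(\Delta)$) if it avoids the images of all cells whose image has dimension $<2(r+s)+|F|$. Oriented refined broccoli curve: an oriented curve each of whose vertices is (I) adjacent to a real marking and exactly two non-contracted edges, both outgoing; (II) unmarked, 3-valent, with two incoming and one outgoing edge; or (III) adjacent to a complex marking and exactly three non-contracted edges, all outgoing (edges of any parity). Unoriented refined broccoli curve: a curve in $\mathcal{M}_{(r,s)}(\Delta)$ each of whose vertices is (I') 3-valent in $\Gamma$ and adjacent to a real marking, (II') 3-valent without marking, or (III') 4-valent in $\Gamma$ and adjacent to a complex marking. *)

theory Defs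
  imports "HOL-Analysis.Analysis"
begin

text \<open>
  A curve C = (Gamma, h, x_1, ..., x_{r+s}) is encoded by
  \<^item> a finite nonempty set of vertices c_verts (natural numbers),
  \<^item> a finite set of bounded edges c_edges (natural numbers), each with two endpoints
    c_src e, c_tgt e, a length c_len e > 0 and an integral direction vector c_dir e
    (the slope of h on e, read from c_src e towards c_tgt e; the orientation src/tgt is
    only bookkeeping and carries no meaning),
  \<^item> the image c_pos v in R^2 of each vertex v,
  \<^item> for each marking i in {1..r+s} the vertex c_mark i it is attached to
    (markings are contracted ends; i \<le> r real, r < i \<le> r+s complex),
  \<^item> for each labelled end y_j, j in {1..n}, the vertex c_endv j it is attached to;
    its outward direction is v_j = the j-th entry of Delta.
  h is then determined (affine on edges, constant on markings, ray of direction v_j on y_j).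
\<close>

record curve =
  c_verts :: "nat set"
  c_edges :: "nat set"
  c_src   :: "nat \<Rightarrow> nat"
  c_tgt   :: "nat \<Rightarrow> nat"
  c_len   :: "nat \<Rightarrow> real"
  c_dir   :: "nat \<Rightarrow> int \<times> int"
  c_pos   :: "nat \<Rightarrow> real \<times> real"
  c_mark  :: "nat \<Rightarrow> nat"
  c_endv  :: "nat \<Rightarrow> nat"

text \<open>The j-th vector of Delta (1-based), as in the paper.\<close>
definition vvec :: "(int \<times> int) list \<Rightarrow> nat \<Rightarrow> int \<times> int" where
  "vvec \<Delta> j = \<Delta> ! (j - 1)"

definition rvec :: "int \<times> int \<Rightarrow> real \<times> real" where
  "rvec u = (real_of_int (fst u), real_of_int (snd u))"

definition ends_at :: "(int \<times> int) list \<Rightarrow> curve \<Rightarrow> nat \<Rightarrow> nat set" where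
  "ends_at \<Delta> C v = {j \<in> {1..length \<Delta>}. c_endv C j = v}"

definition marks_at :: "nat \<Rightarrow> nat \<Rightarrow> curve \<Rightarrow> nat \<Rightarrow> nat set" where
  "marks_at r s C v = {i \<in> {1..r+s}. c_mark C i = v}"

definition edges_at :: "curve \<Rightarrow> nat \<Rightarrow> nat set" where
  "edges_at C v = {e \<in> c_edges C. c_src C e = v \<or> c_tgt C e = v}"

definition valence :: "nat \<Rightarrow> nat \<Rightarrow> (int \<times> int) list \<Rightarrow> curve \<Rightarrow> nat \<Rightarrow> nat" where
  "valence r s \<Delta> C v = card (edges_at C v) + card (marks_at r s C v) + card (ends_at \<Delta> C v)"

definition adj_rel :: "curve \<Rightarrow> (nat \<times> nat) set" where
  "adj_rel C = {(c_src C e, c_tgt C e) | e. e \<in> c_edges C} \<union> {(c_tgt C e, c_src C e) | e. e \<in> c_edges C}"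

text \<open>C is a (representative of a point of) M_(r,s)(Delta): a connected curve whose graph
  is a tree, with positive edge lengths, h affine with integral slopes on edges,
  balanced at every vertex, and no vertices of valence < 3.\<close>
definition is_curve :: "nat \<Rightarrow> nat \<Rightarrow> (int \<times> int) list \<Rightarrow> curve \<Rightarrow> bool" where
  "is_curve r s \<Delta> C \<longleftrightarrow>
     finite (c_verts C) \<and> c_verts C \<noteq> {} \<and> finite (c_edges C) \<and>
     (\<forall>e \<in> c_edges C. c_src C e \<in> c_verts C \<and> c_tgt C e \<in> c_verts C \<and>
        c_src C e \<noteq> c_tgt C e \<and> c_len C e > 0 \<and>
        c_pos C (c_tgt C e) - c_pos C (c_src C e) = c_len C e *\<^sub>R rvec (c_dir C e)) \<and>
     (\<forall>i \<in> {1..r+s}. c_mark C i \<in> c_verts C) \<and>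
     (\<forall>j \<in> {1..length \<Delta>}. c_endv C j \<in> c_verts C) \<and>
     (\<forall>u \<in> c_verts C. \<forall>w \<in> c_verts C. (u, w) \<in> (adj_rel C)\<^sup>*) \<and>
     card (c_edges C) + 1 = card (c_verts C) \<and>
     (\<forall>v \<in> c_verts C.
        (\<Sum>e \<in> {e \<in> c_edges C. c_src C e = v}. c_dir C e)
        - (\<Sum>e \<in> {e \<in> c_edges C. c_tgt C e = v}. c_dir C e)
        + (\<Sum>j \<in> ends_at \<Delta> C v. vvec \<Delta> j) = 0) \<and>
     (\<forall>v \<in> c_verts C. valence r s \<Delta> C v \<ge> 3)"

text \<open>Bijections phi (vertices), psi (bounded edges) identifying the underlying labelled
  graphs of C and D together with the slopes of h (an edge may be traversed in
  the opposite sense, then the slope is negated).\<close>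
definition graph_match ::
  "nat \<Rightarrow> nat \<Rightarrow> (int \<times> int) list \<Rightarrow> curve \<Rightarrow> curve \<Rightarrow> (nat \<Rightarrow> nat) \<Rightarrow> (nat \<Rightarrow> nat) \<Rightarrow> bool" where
  "graph_match r s \<Delta> C D \<phi> \<psi> \<longleftrightarrow>
     bij_betw \<phi> (c_verts C) (c_verts D) \<and> bij_betw \<psi> (c_edges C) (c_edges D) \<and>
     (\<forall>e \<in> c_edges C.
        (c_src D (\<psi> e) = \<phi> (c_src C e) \<and> c_tgt D (\<psi> e) = \<phi> (c_tgt C e) \<and>
         c_dir D (\<psi> e) = c_dir C e) \<or>
        (c_src D (\<psi> e) = \<phi> (c_tgt C e) \<and> c_tgt D (\<psi> e) = \<phi> (c_src C e) \<and>
         c_dir D (\<psi> e) = - c_dir C e)) \<and>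
     (\<forall>i \<in> {1..r+s}. c_mark D i = \<phi> (c_mark C i)) \<and>
     (\<forall>j \<in> {1..length \<Delta>}. c_endv D j = \<phi> (c_endv C j))"

text \<open>Isomorphism of curves (equality in M_(r,s)(Delta)).\<close>
definition curve_iso :: "nat \<Rightarrow> nat \<Rightarrow> (int \<times> int) list \<Rightarrow> curve \<Rightarrow> curve \<Rightarrow> bool" where
  "curve_iso r s \<Delta> C D \<longleftrightarrow>
     (\<exists>\<phi> \<psi>. graph_match r s \<Delta> C D \<phi> \<psi> \<and>
        (\<forall>e \<in> c_edges C. c_len D (\<psi> e) = c_len C e) \<and>
        (\<forall>v \<in> c_verts C. c_pos D (\<phi> v) = c_pos C v))"

definition same_type :: "nat \<Rightarrow> nat \<Rightarrow> (int \<times> int) list \<Rightarrow> curve \<Rightarrow> curve \<Rightarrow> bool" where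
  "same_type r s \<Delta> C D \<longleftrightarrow> (\<exists>\<phi> \<psi>. graph_match r s \<Delta> C D \<phi> \<psi>)"

definition cell :: "nat \<Rightarrow> nat \<Rightarrow> (int \<times> int) list \<Rightarrow> curve \<Rightarrow> curve set" where
  "cell r s \<Delta> C = {D. is_curve r s \<Delta> D \<and> same_type r s \<Delta> C D}"

text \<open>Conditions P = (Pm, Pf): points Pm i in R^2 for the markings, and for j in F a class in
  R^2 / <v_j>, represented by a point Pf j in R^2.\<close>
definition ev_eq ::
  "nat \<Rightarrow> nat \<Rightarrow> (int \<times> int) list \<Rightarrow> nat set \<Rightarrow> curve \<Rightarrow>
   (nat \<Rightarrow> real \<times> real) \<times> (nat \<Rightarrow> real \<times> real) \<Rightarrow> bool" where
  "ev_eq r s \<Delta> F C P \<longleftrightarrow>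
     (\<forall>i \<in> {1..r+s}. c_pos C (c_mark C i) = fst P i) \<and>
     (\<forall>j \<in> F. \<exists>t::real. c_pos C (c_endv C j) - snd P j = t *\<^sub>R rvec (vvec \<Delta> j))"

text \<open>Coordinates of ev_F(C) in R^(2(r+s)+|F|); the factor R^2/<v> (v \<noteq> 0) is identified
  with R via the linear isomorphism induced by p \<mapsto> det(v,p).\<close>
definition det2 :: "int \<times> int \<Rightarrow> real \<times> real \<Rightarrow> real" where
  "det2 v p = real_of_int (fst v) * snd p - real_of_int (snd v) * fst p"

definition ev_coords :: "nat \<Rightarrow> nat \<Rightarrow> (int \<times> int) list \<Rightarrow> nat set \<Rightarrow> curve \<Rightarrow> real list" where
  "ev_coords r s \<Delta> F C =
     concat (map (\<lambda>i. [fst (c_pos C (c_mark C i)), snd (c_pos C (c_mark C i))]) [1..<r+s+1])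
     @ map (\<lambda>j. det2 (vvec \<Delta> j) (c_pos C (c_endv C j))) (sorted_list_of_set F)"

definition aff_indep :: "nat \<Rightarrow> real list list \<Rightarrow> bool" where
  "aff_indep N ps \<longleftrightarrow>
     (\<forall>c :: nat \<Rightarrow> real.
        (\<Sum>i < length ps. c i) = 0 \<and> (\<forall>k < N. (\<Sum>i < length ps. c i * (ps ! i) ! k) = 0)
        \<longrightarrow> (\<forall>i < length ps. c i = 0))"

definition dim_ge :: "nat \<Rightarrow> real list set \<Rightarrow> nat \<Rightarrow> bool" where
  "dim_ge N S d \<longleftrightarrow> (\<exists>ps. length ps = Suc d \<and> set ps \<subseteq> S \<and> aff_indep N ps)"

definition gen_pos ::
  "nat \<Rightarrow> nat \<Rightarrow> (int \<times> int) list \<Rightarrow> nat set \<Rightarrow>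
   (nat \<Rightarrow> real \<times> real) \<times> (nat \<Rightarrow> real \<times> real) \<Rightarrow> bool" where
  "gen_pos r s \<Delta> F P \<longleftrightarrow>
     (\<forall>C. is_curve r s \<Delta> C \<and>
          \<not> dim_ge (2*(r+s) + card F) (ev_coords r s \<Delta> F ` cell r s \<Delta> C) (2*(r+s) + card F)
          \<longrightarrow> \<not> ev_eq r s \<Delta> F C P)"

text \<open>An orientation is a pair (eo, io): for a non-contracted bounded edge e, eo e = True means
  e is oriented from c_src e to c_tgt e; for a labelled end y_j, io j = True means y_j is
  oriented inwards (towards its vertex). Values on contracted edges are irrelevant.\<close>
type_synonym orientation = "(nat \<Rightarrow> bool) \<times> (nat \<Rightarrow> bool)"

definition e_head :: "curve \<Rightarrow> orientation \<Rightarrow> nat \<Rightarrow> nat" where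
  "e_head C ori e = (if fst ori e then c_tgt C e else c_src C e)"

definition e_tail :: "curve \<Rightarrow> orientation \<Rightarrow> nat \<Rightarrow> nat" where
  "e_tail C ori e = (if fst ori e then c_src C e else c_tgt C e)"

definition fixed_ends :: "(int \<times> int) list \<Rightarrow> orientation \<Rightarrow> nat set" where
  "fixed_ends \<Delta> ori = {j \<in> {1..length \<Delta>}. snd ori j}"

definition or_iso ::
  "nat \<Rightarrow> nat \<Rightarrow> (int \<times> int) list \<Rightarrow> curve \<Rightarrow> orientation \<Rightarrow> curve \<Rightarrow> orientation \<Rightarrow> bool" where
  "or_iso r s \<Delta> C ori D ori' \<longleftrightarrow>
     (\<exists>\<phi> \<psi>. graph_match r s \<Delta> C D \<phi> \<psi> \<and>
        (\<forall>e \<in> c_edges C. c_len D (\<psi> e) = c_len C e) \<and>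
        (\<forall>v \<in> c_verts C. c_pos D (\<phi> v) = c_pos C v) \<and>
        (\<forall>e \<in> c_edges C. c_dir C e \<noteq> 0 \<longrightarrow> e_head D ori' (\<psi> e) = \<phi> (e_head C ori e)) \<and>
        (\<forall>j \<in> {1..length \<Delta>}. snd ori' j = snd ori j))"

definition nc_edges_at :: "curve \<Rightarrow> nat \<Rightarrow> nat set" where
  "nc_edges_at C v = {e \<in> edges_at C v. c_dir C e \<noteq> 0}"

text \<open>Number of non-contracted edges at v (labelled ends are never contracted as v_j \<noteq> 0).\<close>
definition num_nc :: "(int \<times> int) list \<Rightarrow> curve \<Rightarrow> nat \<Rightarrow> nat" where
  "num_nc \<Delta> C v = card (nc_edges_at C v) + card (ends_at \<Delta> C v)"

definition num_in :: "(int \<times> int) list \<Rightarrow> curve \<Rightarrow> orientation \<Rightarrow> nat \<Rightarrow> nat" where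
  "num_in \<Delta> C ori v = card {e \<in> nc_edges_at C v. e_head C ori e = v} + card {j \<in> ends_at \<Delta> C v. snd ori j}"

definition num_out :: "(int \<times> int) list \<Rightarrow> curve \<Rightarrow> orientation \<Rightarrow> nat \<Rightarrow> nat" where
  "num_out \<Delta> C ori v = card {e \<in> nc_edges_at C v. e_tail C ori e = v} + card {j \<in> ends_at \<Delta> C v. \<not> snd ori j}"

definition all_outgoing :: "(int \<times> int) list \<Rightarrow> curve \<Rightarrow> orientation \<Rightarrow> nat \<Rightarrow> bool" where
  "all_outgoing \<Delta> C ori v \<longleftrightarrow>
     (\<forall>e \<in> nc_edges_at C v. e_tail C ori e = v) \<and> (\<forall>j \<in> ends_at \<Delta> C v. \<not> snd ori j)"

definition oriented_broccoli ::
  "nat \<Rightarrow> nat \<Rightarrow> (int \<times> int) list \<Rightarrow> curve \<Rightarrow> orientation \<Rightarrow> bool" where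
  "oriented_broccoli r s \<Delta> C ori \<longleftrightarrow>
     (\<forall>v \<in> c_verts C.
        \<comment> \<open>(I)\<close>
        ((\<exists>i \<in> {1..r}. c_mark C i = v) \<and> num_nc \<Delta> C v = 2 \<and> all_outgoing \<Delta> C ori v) \<or>
        \<comment> \<open>(II)\<close>
        (marks_at r s C v = {} \<and> valence r s \<Delta> C v = 3 \<and>
           num_in \<Delta> C ori v = 2 \<and> num_out \<Delta> C ori v = 1) \<or>
        \<comment> \<open>(III)\<close>
        ((\<exists>i \<in> {r+1..r+s}. c_mark C i = v) \<and> num_nc \<Delta> C v = 3 \<and> all_outgoing \<Delta> C ori v))"

definition unoriented_broccoli :: "nat \<Rightarrow> nat \<Rightarrow> (int \<times> int) list \<Rightarrow> curve \<Rightarrow> bool" where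
  "unoriented_broccoli r s \<Delta> C \<longleftrightarrow>
     (\<forall>v \<in> c_verts C.
        \<comment> \<open>(I')\<close>
        (valence r s \<Delta> C v = 3 \<and> (\<exists>i \<in> {1..r}. c_mark C i = v)) \<or>
        \<comment> \<open>(II')\<close>
        (valence r s \<Delta> C v = 3 \<and> marks_at r s C v = {}) \<or>
        \<comment> \<open>(III')\<close>
        (valence r s \<Delta> C v = 4 \<and> (\<exists>i \<in> {r+1..r+s}. c_mark C i = v)))"

definition OrBroc ::
  "nat \<Rightarrow> nat \<Rightarrow> (int \<times> int) list \<Rightarrow> nat set \<Rightarrow>
   (nat \<Rightarrow> real \<times> real) \<times> (nat \<Rightarrow> real \<times> real) \<Rightarrow> curve \<Rightarrow> orientation \<Rightarrow> bool" where
  "OrBroc r s \<Delta> F P C ori \<longleftrightarrow>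
     is_curve r s \<Delta> C \<and> fixed_ends \<Delta> ori = F \<and> oriented_broccoli r s \<Delta> C ori \<and> ev_eq r s \<Delta> F C P"

definition UnBroc ::
  "nat \<Rightarrow> nat \<Rightarrow> (int \<times> int) list \<Rightarrow> nat set \<Rightarrow>
   (nat \<Rightarrow> real \<times> real) \<times> (nat \<Rightarrow> real \<times> real) \<Rightarrow> curve \<Rightarrow> bool" where
  "UnBroc r s \<Delta> F P C \<longleftrightarrow>
     is_curve r s \<Delta> C \<and> unoriented_broccoli r s \<Delta> C \<and> ev_eq r s \<Delta> F C P"

end

theory Submission
  imports Defs
begin

text \<open>
  The key input is a dimension bound: if \<open>P\<close> is in general position, a connected piece \<open>T\<close> of a
  curve through \<open>P\<close> meets at most \<open>2 + #\<close>(non-contracted edges of \<open>T\<close>) conditions, counting a marking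
  twice and a fixed end once. Indeed, on the cell of the curve the coordinates of \<open>ev_F\<close> attached to
  \<open>T\<close> are linear in the position of one vertex and the lengths of the non-contracted edges of \<open>T\<close>,
  so more conditions would push the image of the cell into a hyperplane.

  Consequently every vertex carries at most one marking and in a broccoli curve no bounded edge
  is contracted. The vertex types then say precisely that the orientation has a prescribed net
  inflow at every vertex. In a tree, summing the net inflow over one side of an edge gives \<open>\<plusminus>1\<close>
  according to the direction of that edge, so the orientation is determined by its net inflow
  (uniqueness). For existence, the count \<open>r + 2s + |F| = |\<Delta>| - 1\<close> shows that an unoriented broccoli
  curve has \<open>2(r + s) + |F| - 2\<close> bounded edges, all non-contracted; the dimension bound applied
  to the sides of an edge forces the prescribed inflow to sum to \<open>\<plusminus>1\<close> over each side, and orienting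
  every edge towards the side with sum \<open>1\<close> realises the prescribed inflow.
\<close>

section \<open>Linear algebra\<close>

lemma homogeneous_system_nontrivial_solution:
  fixes A :: "nat \<Rightarrow> nat \<Rightarrow> real"
  assumes "finite J" "finite I" "card J < card I"
  shows "\<exists>c. (\<exists>i\<in>I. c i \<noteq> 0) \<and> (\<forall>j\<in>J. (\<Sum>i\<in>I. A j i * c i) = 0)"
  using assms
proof (induction J arbitrary: I A rule: finite_induct)
  case empty
  then have "I \<noteq> {}" by auto
  then show ?case by (intro exI[of _ "\<lambda>_. 1"]) auto
next
  case (insert j J)
  show ?case
  proof (cases "\<forall>i\<in>I. A j i = 0")
    case True
    from insert.IH[of I A] insert.prems insert.hyps obtain c where
      "\<exists>i\<in>I. c i \<noteq> 0" "\<forall>j\<in>J. (\<Sum>i\<in>I. A j i * c i) = 0" by auto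
    with True show ?thesis by (intro exI[of _ c]) auto
  next
    case False
    then obtain i0 where i0: "i0 \<in> I" "A j i0 \<noteq> 0" by auto
    \<comment> \<open>Gaussian elimination: use equation \<open>j\<close> to eliminate the unknown \<open>i0\<close>.\<close>
    define A' where "A' = (\<lambda>j' i. A j' i - A j' i0 * A j i / A j i0)"
    have "card J < card (I - {i0})" using i0 insert by auto
    from insert.IH[OF finite_Diff[OF insert.prems(1)] this, of A'] obtain c' where
      c': "\<exists>i\<in>I-{i0}. c' i \<noteq> 0" "\<forall>j'\<in>J. (\<Sum>i\<in>I-{i0}. A' j' i * c' i) = 0"
      by auto
    define z where "z = (\<Sum>i\<in>I-{i0}. A j i * c' i)"
    define c where "c = c'(i0 := - z / A j i0)"
    have split: "(\<Sum>i\<in>I. B i * c i) = B i0 * c i0 + (\<Sum>i\<in>I-{i0}. B i * c' i)" for B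
    proof -
      have "(\<Sum>i\<in>I. B i * c i) = B i0 * c i0 + (\<Sum>i\<in>I-{i0}. B i * c i)"
        using i0 insert.prems by (simp add: sum.remove)
      also have "(\<Sum>i\<in>I-{i0}. B i * c i) = (\<Sum>i\<in>I-{i0}. B i * c' i)"
        by (rule sum.cong) (auto simp: c_def)
      finally show ?thesis .
    qed
    have "(\<Sum>i\<in>I. A j' i * c i) = 0" if "j' \<in> J" for j'
    proof -
      have "0 = (\<Sum>i\<in>I-{i0}. A' j' i * c' i)" using c' that by auto
      also have "\<dots> = (\<Sum>i\<in>I-{i0}. A j' i * c' i) - A j' i0 / A j i0 * z"
        by (simp add: A'_def z_def algebra_simps sum_subtractf sum_distrib_left sum_divide_distrib)
      finally show ?thesis unfolding split using i0 by (simp add: c_def algebra_simps)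
    qed
    moreover have "(\<Sum>i\<in>I. A j i * c i) = 0"
      unfolding split using i0 by (simp add: c_def z_def)
    moreover have "\<exists>i\<in>I. c i \<noteq> 0" using c' by (auto simp: c_def)
    ultimately show ?thesis by (intro exI[of _ c]) auto
  qed
qed

lemma not_dim_ge_in_hyperplane:
  fixes a :: "nat \<Rightarrow> real"
  assumes "k0 < N" "a k0 \<noteq> 0"
    and hyperplane: "\<forall>p\<in>S. (\<Sum>k<N. a k * p ! k) = 0"
  shows "\<not> dim_ge N S N"
proof
  assume "dim_ge N S N"
  then obtain ps where ps: "length ps = Suc N" "set ps \<subseteq> S" "aff_indep N ps"
    unfolding dim_ge_def by auto
  \<comment> \<open>\<open>N + 1\<close> points satisfy the \<open>N\<close> linear conditions "coefficients sum to 0" and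
     "coordinate \<open>k\<close> vanishes" for \<open>k \<noteq> k0\<close>; the hyperplane then kills coordinate \<open>k0\<close> too.\<close>
  define J where "J = insert N ({..<N} - {k0})"
  define A where "A = (\<lambda>j i. if j = N then 1 else ps ! i ! j :: real)"
  have "card J < card {..<Suc N}" using assms(1) by (simp add: J_def)
  from homogeneous_system_nontrivial_solution[OF _ _ this, of A] obtain c where
    c: "\<exists>i\<in>{..<Suc N}. c i \<noteq> 0" "\<forall>j\<in>J. (\<Sum>i<Suc N. A j i * c i) = 0"
    by (auto simp: J_def)
  have sum_c: "(\<Sum>i<length ps. c i) = 0" using c(2) by (auto simp: J_def A_def ps(1))
  have coord: "(\<Sum>i<length ps. c i * (ps ! i) ! k) = 0" if "k < N" "k \<noteq> k0" for k
    using c(2) that by (auto simp: J_def A_def ps(1) mult.commute)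
  have "(\<Sum>k<N. a k * (\<Sum>i<length ps. c i * (ps ! i) ! k))
      = (\<Sum>i<length ps. c i * (\<Sum>k<N. a k * ps ! i ! k))"
    by (simp add: sum_distrib_left sum.swap[of _ "{..<N}"] algebra_simps)
  also have "\<dots> = 0"
  proof (intro sum.neutral ballI)
    fix i assume "i \<in> {..<length ps}"
    then have "ps ! i \<in> S" using ps(2) nth_mem by auto
    then show "c i * (\<Sum>k<N. a k * ps ! i ! k) = 0" using hyperplane by simp
  qed
  also have "(\<Sum>k<N. a k * (\<Sum>i<length ps. c i * (ps ! i) ! k))
      = a k0 * (\<Sum>i<length ps. c i * (ps ! i) ! k0)"
    using assms(1) by (subst sum.remove[of _ k0]) (auto simp: coord)
  finally have "(\<Sum>i<length ps. c i * (ps ! i) ! k0) = 0" using assms(2) by simp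
  with coord have "\<forall>k<N. (\<Sum>i<length ps. c i * (ps ! i) ! k) = 0" by metis
  with sum_c ps(3) have "\<forall>i<length ps. c i = 0" unfolding aff_indep_def by blast
  with c(1) ps(1) show False by auto
qed

text \<open>Fewer than \<open>card K\<close> parameters leave a linear relation among the coordinates in \<open>K\<close>
  that holds on all of \<open>S\<close>.\<close>
lemma not_dim_ge_if_coords_factor:
  fixes A :: "nat \<Rightarrow> nat \<Rightarrow> real"
  assumes "finite K" "K \<subseteq> {..<N}" "finite Q" "card Q < card K"
    and factor: "\<And>p. p \<in> S \<Longrightarrow> \<exists>val. \<forall>k\<in>K. p ! k = (\<Sum>\<pi>\<in>Q. A \<pi> k * val \<pi>)"
  shows "\<not> dim_ge N S N"
proof -
  obtain c where c: "\<exists>k\<in>K. c k \<noteq> 0" "\<forall>\<pi>\<in>Q. (\<Sum>k\<in>K. A \<pi> k * c k) = 0"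
    using homogeneous_system_nontrivial_solution[OF assms(3,1,4), of A] by blast
  then obtain k0 where k0: "k0 \<in> K" "c k0 \<noteq> 0" by blast
  define a where "a k = (if k \<in> K then c k else 0)" for k
  have "\<forall>p\<in>S. (\<Sum>k<N. a k * p ! k) = 0"
  proof
    fix p assume p: "p \<in> S"
    obtain val where val: "\<forall>k\<in>K. p ! k = (\<Sum>\<pi>\<in>Q. A \<pi> k * val \<pi>)"
      using factor[OF p] by blast
    have "(\<Sum>k<N. a k * p ! k) = (\<Sum>k\<in>K. a k * p ! k)"
      using assms(1,2) by (intro sum.mono_neutral_right) (auto simp: a_def)
    also have "\<dots> = (\<Sum>k\<in>K. c k * (\<Sum>\<pi>\<in>Q. A \<pi> k * val \<pi>))"
      using val by (intro sum.cong) (simp_all add: a_def)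
    also have "\<dots> = (\<Sum>k\<in>K. \<Sum>\<pi>\<in>Q. val \<pi> * (A \<pi> k * c k))"
      by (simp add: sum_distrib_left mult_ac)
    also have "\<dots> = (\<Sum>\<pi>\<in>Q. \<Sum>k\<in>K. val \<pi> * (A \<pi> k * c k))"
      by (rule sum.swap)
    also have "\<dots> = (\<Sum>\<pi>\<in>Q. val \<pi> * (\<Sum>k\<in>K. A \<pi> k * c k))"
      by (simp add: sum_distrib_left)
    also have "\<dots> = 0" using c(2) by simp
    finally show "(\<Sum>k<N. a k * p ! k) = 0" .
  qed
  moreover have "k0 < N" "a k0 \<noteq> 0" using k0 assms(2) by (auto simp: a_def)
  ultimately show ?thesis using not_dim_ge_in_hyperplane[of k0 N a S] by blast
qed

section \<open>Connected components\<close>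

definition edge_rel :: "(nat \<Rightarrow> nat) \<Rightarrow> (nat \<Rightarrow> nat) \<Rightarrow> nat set \<Rightarrow> (nat \<times> nat) set" where
  "edge_rel sr tg S = {(sr f, tg f) | f. f \<in> S} \<union> {(tg f, sr f) | f. f \<in> S}"

definition component :: "(nat \<Rightarrow> nat) \<Rightarrow> (nat \<Rightarrow> nat) \<Rightarrow> nat set \<Rightarrow> nat \<Rightarrow> nat set" where
  "component sr tg S x = {w. (x, w) \<in> (edge_rel sr tg S)\<^sup>*}"

lemma sym_edge_rel: "sym (edge_rel sr tg S)"
  unfolding edge_rel_def sym_def by blast

lemma component_self[simp]: "x \<in> component sr tg S x"
  by (simp add: component_def)

lemma component_trans: "y \<in> component sr tg S x \<Longrightarrow> z \<in> component sr tg S y \<Longrightarrow> z \<in> component sr tg S x"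
  unfolding component_def by auto

lemma component_sym: "y \<in> component sr tg S x \<Longrightarrow> x \<in> component sr tg S y"
  unfolding component_def using symD[OF sym_rtrancl[OF sym_edge_rel]] by blast

lemma component_eq: "y \<in> component sr tg S x \<Longrightarrow> component sr tg S y = component sr tg S x"
  by (meson component_sym component_trans subsetI subset_antisym)

lemma component_edge_ends: "y \<in> component sr tg S x \<Longrightarrow> f \<in> S \<Longrightarrow> y = sr f \<or> y = tg f \<Longrightarrow>
   sr f \<in> component sr tg S x \<and> tg f \<in> component sr tg S x"
  unfolding component_def edge_rel_def
  by (auto intro: rtrancl_into_rtrancl)

lemma component_edge_iff:
  assumes "y \<in> component sr tg S x" "f \<in> S"
  shows "sr f \<in> component sr tg S x \<longleftrightarrow> tg f \<in> component sr tg S x"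
  using component_edge_ends[of _ sr tg S x f] assms by blast

lemma component_mono: "S \<subseteq> S' \<Longrightarrow> component sr tg S x \<subseteq> component sr tg S' x"
  unfolding component_def edge_rel_def by (auto elim!: rtrancl_mono[THEN subsetD, rotated])

lemma component_induct:
  assumes "y \<in> component sr tg S x" "x \<in> R"
    and "\<And>f. f \<in> S \<Longrightarrow> sr f \<in> R \<longleftrightarrow> tg f \<in> R"
  shows "y \<in> R"
proof -
  have "(x, y) \<in> (edge_rel sr tg S)\<^sup>*" using assms(1) by (simp add: component_def)
  then show ?thesis
  proof (induction rule: rtrancl_induct)
    case base then show ?case using assms(2) .
  next
    case (step y z) then show ?case using assms(3) unfolding edge_rel_def by auto
  qed
qed

lemma component_subset_endpoints: "component sr tg S x \<subseteq> insert x (sr ` S \<union> tg ` S)"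
proof
  fix y assume "y \<in> component sr tg S x"
  then show "y \<in> insert x (sr ` S \<union> tg ` S)" by (rule component_induct) auto
qed

lemma component_subset:
  assumes "x \<in> V" "\<forall>f\<in>S. sr f \<in> V \<and> tg f \<in> V"
  shows "component sr tg S x \<subseteq> V"
  using component_subset_endpoints[of sr tg S x] assms by auto

lemma finite_component: "finite S \<Longrightarrow> finite (component sr tg S x)"
  by (rule finite_subset[OF component_subset_endpoints]) simp

lemma component_insert_edge_outside:
  assumes "sr g \<notin> component sr tg S x" "tg g \<notin> component sr tg S x"
  shows "component sr tg (insert g S) x = component sr tg S x"
proof
  show "component sr tg (insert g S) x \<subseteq> component sr tg S x"
  proof
    fix y assume "y \<in> component sr tg (insert g S) x"
    then show "y \<in> component sr tg S x"
      by (rule component_induct) (use assms component_edge_iff[of _ sr tg S x] in auto)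
  qed
qed (rule component_mono, blast)

lemma component_insert_edge:
  assumes "a \<in> component sr tg S x" "{a, b} = {sr g, tg g}"
  shows "component sr tg (insert g S) x = component sr tg S x \<union> component sr tg S b"
proof
  show "component sr tg (insert g S) x \<subseteq> component sr tg S x \<union> component sr tg S b"
  proof
    fix y assume "y \<in> component sr tg (insert g S) x"
    then show "y \<in> component sr tg S x \<union> component sr tg S b"
    proof (rule component_induct)
      show "x \<in> component sr tg S x \<union> component sr tg S b" by simp
      fix f assume f: "f \<in> insert g S"
      show "sr f \<in> component sr tg S x \<union> component sr tg S b \<longleftrightarrow> tg f \<in> component sr tg S x \<union> component sr tg S b"
      proof (cases "f = g")
        case True
        have "a \<in> component sr tg S x \<union> component sr tg S b" "b \<in> component sr tg S x \<union> component sr tg S b"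
          using assms by auto
        then show ?thesis using assms(2) True by (metis doubleton_eq_iff)
      next
        case False
        then have "f \<in> S" using f by auto
        then show ?thesis using component_edge_iff[of _ sr tg S] by blast
      qed
    qed
  qed
next
  have sub: "S \<subseteq> insert g S" by auto
  have "b \<in> component sr tg (insert g S) x"
  proof -
    have "a \<in> component sr tg (insert g S) x" using component_mono[OF sub] assms(1) by auto
    moreover have "a = sr g \<or> a = tg g" "b = sr g \<or> b = tg g" using assms(2) by (auto simp: doubleton_eq_iff)
    ultimately show ?thesis using component_edge_ends[of a sr tg "insert g S" x g] by auto
  qed
  then show "component sr tg S x \<union> component sr tg S b \<subseteq> component sr tg (insert g S) x"
    using component_mono[OF sub] component_trans by blast
qed

lemma component_eq_if_meet:
  assumes "component sr tg S x \<inter> component sr tg S y \<noteq> {}"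
  shows "component sr tg S x = component sr tg S y"
  using assms component_eq by blast

lemma card_component_le:
  assumes "finite S"
  shows "card (component sr tg S x) \<le> card {f\<in>S. sr f \<in> component sr tg S x} + 1"
  using assms
proof (induction S arbitrary: x rule: finite_induct)
  case empty
  have "component sr tg {} x = {x}" unfolding component_def edge_rel_def by auto
  then show ?case by simp
next
  case (insert g S)
  let ?R = "component sr tg S x"
  let ?R' = "component sr tg (insert g S) x"
  show ?case
  proof (cases "sr g \<in> ?R \<or> tg g \<in> ?R")
    case False
    then have eq: "?R' = ?R" by (simp add: component_insert_edge_outside)
    have "{f \<in> insert g S. sr f \<in> ?R'} = {f\<in>S. sr f \<in> ?R}" using False eq by auto
    then show ?thesis using insert.IH[of x] eq by simp
  next
    case True
    then obtain a b where ab: "a \<in> ?R" "{a, b} = {sr g, tg g}" by blast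
    have eq: "?R' = ?R \<union> component sr tg S b" by (rule component_insert_edge[OF ab])
    have fin: "finite ?R" "finite (component sr tg S b)" using finite_component insert.hyps by auto
    show ?thesis
    proof (cases "?R \<inter> component sr tg S b = {}")
      case False
      then have "component sr tg S b = ?R" using component_eq_if_meet by blast
      then have "?R' = ?R" using eq by auto
      moreover have "card {f\<in>S. sr f \<in> ?R} \<le> card {f \<in> insert g S. sr f \<in> ?R}"
        by (rule card_mono) (use insert.hyps in auto)
      ultimately show ?thesis using insert.IH[of x] by simp
    next
      case True
      let ?B = "component sr tg S b"
      let ?ER = "{f\<in>S. sr f \<in> ?R}" and ?EB = "{f\<in>S. sr f \<in> ?B}"
      have "sr g \<in> ?R'"
        using ab eq by (metis UnI1 UnI2 doubleton_eq_iff component_self)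
      have "card ?R' = card ?R + card ?B" using eq fin True by (simp add: card_Un_disjoint)
      also have "\<dots> \<le> card ?ER + card ?EB + 1 + 1"
        using insert.IH[of x] insert.IH[of b] by simp
      also have "\<dots> = card (insert g (?ER \<union> ?EB)) + 1"
        using True insert.hyps by (simp add: card_Un_disjoint disjoint_iff)
      also have "card (insert g (?ER \<union> ?EB)) \<le> card {f \<in> insert g S. sr f \<in> ?R'}"
        using \<open>sr g \<in> ?R'\<close> eq insert.hyps by (intro card_mono) auto
      finally show ?thesis by simp
    qed
  qed
qed

section \<open>Trees\<close>

definition other_end :: "(nat \<Rightarrow> nat) \<Rightarrow> (nat \<Rightarrow> nat) \<Rightarrow> nat \<Rightarrow> nat \<Rightarrow> nat" where
  "other_end sr tg f v = (if sr f = v then tg f else sr f)"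

locale tree =
  fixes V E :: "nat set" and sr tg :: "nat \<Rightarrow> nat"
  assumes finV: "finite V" and finE: "finite E"
    and ends: "\<forall>f\<in>E. sr f \<in> V \<and> tg f \<in> V \<and> sr f \<noteq> tg f"
    and conn: "\<forall>u\<in>V. \<forall>w\<in>V. (u, w) \<in> (edge_rel sr tg E)\<^sup>*"
    and cardVE: "card E + 1 = card V"
begin

definition side :: "nat \<Rightarrow> nat \<Rightarrow> nat set" where
  "side e u = component sr tg (E - {e}) u"

lemma component_all: "x \<in> V \<Longrightarrow> component sr tg E x = V"
proof
  assume x: "x \<in> V"
  show "component sr tg E x \<subseteq> V" by (rule component_subset[OF x]) (use ends in auto)
  show "V \<subseteq> component sr tg E x" using conn x by (auto simp: component_def)
qed

lemma side_subset: "u \<in> V \<Longrightarrow> side e u \<subseteq> V"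
  unfolding side_def by (rule component_subset) (use ends in auto)

lemma finite_side: "finite (side e u)"
  unfolding side_def by (rule finite_component) (use finE in auto)

lemma side_cover:
  assumes "e \<in> E" shows "V \<subseteq> side e (sr e) \<union> side e (tg e)"
proof
  fix w assume "w \<in> V"
  then have "w \<in> component sr tg E (sr e)" using conn ends assms by (auto simp: component_def)
  then show "w \<in> side e (sr e) \<union> side e (tg e)"
  proof (rule component_induct)
    show "sr e \<in> side e (sr e) \<union> side e (tg e)" by (simp add: side_def)
    fix f assume "f \<in> E"
    show "sr f \<in> side e (sr e) \<union> side e (tg e) \<longleftrightarrow> tg f \<in> side e (sr e) \<union> side e (tg e)"
    proof (cases "f = e")
      case True then show ?thesis by (simp add: side_def)
    next
      case False then have "f \<in> E - {e}" using \<open>f \<in> E\<close> by auto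
      then show ?thesis unfolding side_def using component_edge_iff[of _ sr tg "E - {e}"] by blast
    qed
  qed
qed

lemma sides_disjoint:
  assumes "e \<in> E" shows "side e (sr e) \<inter> side e (tg e) = {}"
proof (rule ccontr)
  assume "side e (sr e) \<inter> side e (tg e) \<noteq> {}"
  then have eq: "side e (tg e) = side e (sr e)" unfolding side_def using component_eq_if_meet by blast
  then have "V \<subseteq> side e (sr e)" using side_cover[OF assms] by auto
  then have "card V \<le> card (side e (sr e))" using finite_side by (simp add: card_mono)
  also have "\<dots> \<le> card {f\<in>E-{e}. sr f \<in> side e (sr e)} + 1"
    unfolding side_def by (rule card_component_le) (use finE in auto)
  finally have a: "card V \<le> card {f\<in>E-{e}. sr f \<in> side e (sr e)} + 1" .
  have "card {f\<in>E-{e}. sr f \<in> side e (sr e)} \<le> card (E - {e})"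
    by (rule card_mono) (use finE in auto)
  with a have "card V \<le> card (E - {e}) + 1" by linarith
  moreover have "card E > 0" using assms finE by (auto simp: card_gt_0_iff)
  ultimately show False using cardVE assms finE by (simp add: card_Diff_singleton)
qed

lemma card_side:
  assumes "e \<in> E" "u = sr e \<or> u = tg e"
  shows "card (side e u) = card {f\<in>E-{e}. sr f \<in> side e u} + 1"
proof -
  let ?A = "side e (sr e)" and ?B = "side e (tg e)"
  let ?EA = "{f\<in>E-{e}. sr f \<in> ?A}" and ?EB = "{f\<in>E-{e}. sr f \<in> ?B}"
  have V: "V = ?A \<union> ?B" using side_cover[OF assms(1)] side_subset ends assms(1) by auto
  have cV: "card V = card ?A + card ?B" using V sides_disjoint[OF assms(1)] finite_side by (simp add: card_Un_disjoint)
  have eqE: "E - {e} = ?EA \<union> ?EB" using V ends by auto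
  have cEE: "card (E - {e}) = card (?EA \<union> ?EB)" using arg_cong[OF eqE, of card] .
  have "?EA \<inter> ?EB = {}" using sides_disjoint[OF assms(1)] by auto
  moreover have "card (?EA \<union> ?EB) = card ?EA + card ?EB"
    by (rule card_Un_disjoint) (use finE \<open>?EA \<inter> ?EB = {}\<close> in auto)
  ultimately have "card (E - {e}) = card ?EA + card ?EB" using cEE by linarith
  moreover have "card E > 0" using assms finE by (auto simp: card_gt_0_iff)
  ultimately have cE: "card ?EA + card ?EB + 2 = card V" using cardVE assms finE
    by (simp add: card_Diff_singleton)
  have a: "card ?A \<le> card ?EA + 1" unfolding side_def by (rule card_component_le) (use finE in auto)
  have b: "card ?B \<le> card ?EB + 1" unfolding side_def by (rule card_component_le) (use finE in auto)
  show ?thesis using assms(2) a b cE cV by auto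
qed

lemma side_closed: "f \<in> E \<Longrightarrow> f \<noteq> e \<Longrightarrow> sr f \<in> side e u \<longleftrightarrow> tg f \<in> side e u"
  unfolding side_def by (rule component_edge_iff[of u]) auto

lemma side_self[simp]: "u \<in> side e u" by (simp add: side_def)

lemma other_end_simps:
  assumes "f \<in> E" "sr f = v \<or> tg f = v"
  shows "other_end sr tg f v \<noteq> v" "{v, other_end sr tg f v} = {sr f, tg f}"
  using assms ends by (auto simp: other_end_def)

lemma side_other_end:
  assumes "f \<in> E" "sr f = v \<or> tg f = v"
  shows "v \<notin> side f (other_end sr tg f v)" "side f v \<inter> side f (other_end sr tg f v) = {}"
proof -
  have d: "side f v \<inter> side f (other_end sr tg f v) = {}"
    using sides_disjoint[OF assms(1)] assms by (auto simp: other_end_def Int_commute)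
  then show "side f v \<inter> side f (other_end sr tg f v) = {}" .
  show "v \<notin> side f (other_end sr tg f v)" using d side_self[of v f] by blast
qed

lemma other_end_notin_side:
  assumes "f \<in> E" "sr f = v \<or> tg f = v"
  shows "other_end sr tg f v \<notin> side f v"
  using side_other_end(2)[OF assms] side_self[of "other_end sr tg f v" f] by blast

lemma card_side_endpoints:
  assumes e: "e \<in> E" and u: "u = sr e \<or> u = tg e"
  shows "card {f\<in>E. sr f \<in> side e u} + card {f\<in>E. tg f \<in> side e u}
        = 2 * card {f\<in>E - {e}. sr f \<in> side e u} + 1"
proof -
  let ?T = "side e u" and ?I = "{f\<in>E - {e}. sr f \<in> side e u}"
  have "other_end sr tg e u \<notin> ?T" using other_end_notin_side[OF e] u by blast
  then have one: "(sr e \<in> ?T \<and> tg e \<notin> ?T) \<or> (sr e \<notin> ?T \<and> tg e \<in> ?T)"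
    using u ends e by (auto simp: other_end_def split: if_splits)
  have "{f\<in>E. sr f \<in> ?T} = ?I \<union> (if sr e \<in> ?T then {e} else {})"
    using e by auto
  moreover have "{f\<in>E. tg f \<in> ?T} = ?I \<union> (if tg e \<in> ?T then {e} else {})"
    using e side_closed[of _ e u] by auto
  moreover have "finite ?I" using finE by auto
  ultimately show ?thesis using one by auto
qed

lemma side_avoid:
  assumes "f \<in> E" "sr f = v \<or> tg f = v" "g \<in> E" "sr g = v \<or> tg g = v" "g \<noteq> f"
    and "w \<in> side f (other_end sr tg f v)"
  shows "w \<in> component sr tg (E - {g}) (other_end sr tg f v)"
proof -
  let ?u = "other_end sr tg f v"
  let ?R = "component sr tg (E - {g}) ?u \<inter> side f ?u"
  have "w \<in> ?R"
    using assms(6)[unfolded side_def]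
  proof (rule component_induct)
    show "?u \<in> ?R" by simp
    fix h assume h: "h \<in> E - {f}"
    show "sr h \<in> ?R \<longleftrightarrow> tg h \<in> ?R"
    proof (cases "h = g")
      case True
      have "v \<notin> side f ?u" using side_other_end assms by auto
      then have "sr h \<notin> side f ?u \<and> tg h \<notin> side f ?u"
        using side_closed[of h f ?u] True assms h by auto
      then show ?thesis by auto
    next
      case False
      then show ?thesis using side_closed[of h f ?u] h component_edge_iff[of _ sr tg "E - {g}" ?u h] by auto
    qed
  qed
  then show ?thesis by simp
qed

lemma Diff_vertex_eq_UN_sides:
  assumes "v \<in> V"
  shows "V - {v} = (\<Union>f\<in>{f\<in>E. sr f = v \<or> tg f = v}. side f (other_end sr tg f v))"
proof
  show "(\<Union>f\<in>{f\<in>E. sr f = v \<or> tg f = v}. side f (other_end sr tg f v)) \<subseteq> V - {v}"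
  proof
    fix w assume "w \<in> (\<Union>f\<in>{f\<in>E. sr f = v \<or> tg f = v}. side f (other_end sr tg f v))"
    then obtain f where f: "f \<in> E" "sr f = v \<or> tg f = v" and w: "w \<in> side f (other_end sr tg f v)"
      by auto
    have "other_end sr tg f v \<in> V" using f ends by (auto simp: other_end_def)
    then show "w \<in> V - {v}" using side_subset side_other_end[OF f] w by auto
  qed
next
  let ?U = "insert v (\<Union>f\<in>{f\<in>E. sr f = v \<or> tg f = v}. side f (other_end sr tg f v))"
  have "w \<in> ?U" if "w \<in> V" for w
  proof -
    have "w \<in> component sr tg E v" using conn that assms by (auto simp: component_def)
    then show ?thesis
    proof (rule component_induct)
      fix h assume h: "h \<in> E"
      show "sr h \<in> ?U \<longleftrightarrow> tg h \<in> ?U"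
      proof (cases "sr h = v \<or> tg h = v")
        case True
        then have "other_end sr tg h v \<in> ?U" using h side_self by blast
        then show ?thesis using True by (auto simp: other_end_def split: if_splits)
      next
        case False
        then have "sr h \<in> side f (other_end sr tg f v) \<longleftrightarrow> tg h \<in> side f (other_end sr tg f v)"
          if "f \<in> E" "sr f = v \<or> tg f = v" for f
          using that False side_closed[OF h, of f] by auto
        then show ?thesis using False by simp
      qed
    qed simp
  qed
  then show "V - {v} \<subseteq> (\<Union>f\<in>{f\<in>E. sr f = v \<or> tg f = v}. side f (other_end sr tg f v))"
    by blast
qed

lemma sides_at_vertex_disjoint:
  assumes "f \<in> {f\<in>E. sr f = v \<or> tg f = v}" "g \<in> {f\<in>E. sr f = v \<or> tg f = v}" "f \<noteq> g"
  shows "side f (other_end sr tg f v) \<inter> side g (other_end sr tg g v) = {}"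
proof -
  note f = assms(1) and g = assms(2) and fg = assms(3)
  show "side f (other_end sr tg f v) \<inter> side g (other_end sr tg g v) = {}"
  proof (rule ccontr)
    assume "side f (other_end sr tg f v) \<inter> side g (other_end sr tg g v) \<noteq> {}"
    then obtain w where w: "w \<in> side f (other_end sr tg f v)" "w \<in> side g (other_end sr tg g v)" by blast
    have "w \<in> component sr tg (E - {g}) (other_end sr tg f v)" using side_avoid f g fg w by auto
    then have "other_end sr tg f v \<in> side g (other_end sr tg g v)"
      using w(2) unfolding side_def by (meson component_sym component_trans)
    moreover have "f \<in> E - {g}" using f fg by auto
    ultimately have "v \<in> side g (other_end sr tg g v)"
      using component_edge_ends[of "other_end sr tg f v" sr tg "E - {g}" "other_end sr tg g v" f] f unfolding side_def
      by (auto simp: other_end_def split: if_splits)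
    then show False using side_other_end g by auto
  qed
qed

end

section \<open>Orientations of a tree\<close>

lemma sum_card_fibres:
  assumes "finite A" "finite W"
  shows "(\<Sum>v\<in>W. card {i\<in>A. g i = v}) = card {i\<in>A. g i \<in> W}"
proof -
  have "{i\<in>A. g i \<in> W} = (\<Union>v\<in>W. {i\<in>A. g i = v})" by auto
  moreover have "card (\<Union>v\<in>W. {i\<in>A. g i = v}) = (\<Sum>v\<in>W. card {i\<in>A. g i = v})"
    by (rule card_UN_disjoint) (use assms in auto)
  ultimately show ?thesis by simp
qed

lemma sum_sign_eq_card_diff:
  assumes "finite A"
  shows "(\<Sum>f\<in>A. if P f then 1 else -1 :: int) = int (card {f\<in>A. P f}) - int (card {f\<in>A. \<not> P f})"
proof -
  have "(\<Sum>f\<in>A. if P f then 1 else -1 :: int) = (\<Sum>f\<in>A \<inter> {x. P x}. 1) + (\<Sum>f\<in>A \<inter> - {x. P x}. -1)"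
    by (rule sum.If_cases[OF assms])
  moreover have "A \<inter> {x. P x} = {f\<in>A. P f}" "A \<inter> - {x. P x} = {f\<in>A. \<not> P f}" by auto
  ultimately show ?thesis by simp
qed

context tree
begin

text \<open>An orientation is encoded by the choice of a head \<open>h f\<close> (an endpoint) for every edge \<open>f\<close>.\<close>
definition net_inflow :: "(nat \<Rightarrow> nat) \<Rightarrow> nat \<Rightarrow> int" where
  "net_inflow h v = int (card {f\<in>E. h f = v}) - int (card {f\<in>E. (sr f = v \<or> tg f = v) \<and> h f \<noteq> v})"

lemma side_sum_split:
  assumes "e \<in> E"
  shows "(\<Sum>v\<in>side e (sr e). g v) + (\<Sum>v\<in>side e (tg e). g v) = (\<Sum>v\<in>V. g v)"
proof -
  have V: "V = side e (sr e) \<union> side e (tg e)" using side_cover[OF assms] side_subset ends assms by auto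
  show ?thesis unfolding V by (rule sum.union_disjoint[symmetric]) (use finite_side sides_disjoint[OF assms] in auto)
qed

text \<open>Edges inside a side contribute \<open>+1\<close> and \<open>-1\<close>; only \<open>e\<close> crosses it.\<close>
lemma sum_net_inflow_side:
  assumes hE: "\<forall>f\<in>E. h f = sr f \<or> h f = tg f" and e: "e \<in> E" and u: "u = sr e \<or> u = tg e"
  shows "(\<Sum>v\<in>side e u. net_inflow h v) = (if h e = u then 1 else -1)"
proof -
  let ?T = "side e u"
  define tl where "tl f = (if h f = sr f then tg f else sr f)" for f
  have tl_eq: "{f\<in>E. (sr f = v \<or> tg f = v) \<and> h f \<noteq> v} = {f\<in>E. tl f = v}" for v
    using hE ends by (auto simp: tl_def)
  have s1: "(\<Sum>v\<in>?T. int (card {f\<in>E. h f = v})) = int (card {f\<in>E. h f \<in> ?T})"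
    using sum_card_fibres[OF finE finite_side, of h e u] by (simp flip: of_nat_sum)
  have s2: "(\<Sum>v\<in>?T. int (card {f\<in>E. tl f = v})) = int (card {f\<in>E. tl f \<in> ?T})"
    using sum_card_fibres[OF finE finite_side, of tl e u] by (simp flip: of_nat_sum)
  let ?I = "{f\<in>E-{e}. sr f \<in> ?T}"
  have inner: "f \<in> E - {e} \<Longrightarrow> (h f \<in> ?T \<longleftrightarrow> sr f \<in> ?T) \<and> (tl f \<in> ?T \<longleftrightarrow> sr f \<in> ?T)" for f
    using hE side_closed[of f e u] by (auto simp: tl_def)
  have uT: "u \<in> ?T" by simp
  have oT: "other_end sr tg e u \<notin> ?T" using other_end_notin_side[OF e] u by blast
  have ou: "other_end sr tg e u \<noteq> u" "{u, other_end sr tg e u} = {sr e, tg e}" using other_end_simps[OF e] u by auto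
  have H: "{f\<in>E. h f \<in> ?T} = ?I \<union> (if h e = u then {e} else {})"
  proof -
    have "h e \<in> ?T \<longleftrightarrow> h e = u" using hE e ou uT oT by (metis doubleton_eq_iff)
    then show ?thesis using inner e by auto
  qed
  have L: "{f\<in>E. tl f \<in> ?T} = ?I \<union> (if h e = u then {} else {e})"
  proof -
    have "tl e \<in> ?T \<longleftrightarrow> h e \<noteq> u" using hE e ou uT oT ends unfolding tl_def
      by (metis doubleton_eq_iff)
    then show ?thesis using inner e by auto
  qed
  have finI: "finite ?I" using finE by auto
  have "(\<Sum>v\<in>?T. net_inflow h v) = int (card {f\<in>E. h f \<in> ?T}) - int (card {f\<in>E. tl f \<in> ?T})"
    unfolding net_inflow_def tl_eq sum_subtractf s1 s2 ..
  also have "\<dots> = (if h e = u then 1 else -1)"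
    unfolding H L using finI by auto
  finally show ?thesis .
qed

lemma net_inflow_orient_by_side_sums:
  fixes g :: "nat \<Rightarrow> int"
  assumes tot: "(\<Sum>v\<in>V. g v) = 0"
    and pm: "\<forall>e\<in>E. (\<Sum>v\<in>side e (tg e). g v) \<in> {1, -1}"
    and h_def: "\<And>e. h e = (if (\<Sum>v\<in>side e (tg e). g v) = 1 then tg e else sr e)"
    and v: "v \<in> V"
  shows "net_inflow h v = g v"
proof -
  let ?Ev = "{f\<in>E. sr f = v \<or> tg f = v}"
  have finEv: "finite ?Ev" using finE by auto
  have a: "{f\<in>E. h f = v} = {f\<in>?Ev. h f = v}" using h_def by auto
  have "net_inflow h v = (\<Sum>f\<in>?Ev. if h f = v then 1 else -1)"
    unfolding net_inflow_def sum_sign_eq_card_diff[OF finEv] a by simp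
  also have "\<dots> = (\<Sum>f\<in>?Ev. - (\<Sum>w\<in>side f (other_end sr tg f v). g w))"
  proof (rule sum.cong[OF refl])
    fix f assume f: "f \<in> ?Ev"
    have sp: "(\<Sum>w\<in>side f (sr f). g w) = - (\<Sum>w\<in>side f (tg f). g w)"
      using side_sum_split[of f g] tot f by auto
    have srtg: "sr f \<noteq> tg f" using ends f by auto
    show "(if h f = v then 1 else -1) = - (\<Sum>w\<in>side f (other_end sr tg f v). g w)"
      using f pm sp srtg h_def[of f] unfolding other_end_def by auto
  qed
  also have "\<dots> = - (\<Sum>f\<in>?Ev. \<Sum>w\<in>side f (other_end sr tg f v). g w)"
    by (simp add: sum_negf)
  also have "(\<Sum>f\<in>?Ev. \<Sum>w\<in>side f (other_end sr tg f v). g w) = (\<Sum>w\<in>V - {v}. g w)"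
  proof -
    have "(\<Sum>w\<in>V - {v}. g w) = (\<Sum>w\<in>(\<Union>f\<in>?Ev. side f (other_end sr tg f v)). g w)"
      using Diff_vertex_eq_UN_sides[OF v] by simp
    also have "\<dots> = (\<Sum>f\<in>?Ev. \<Sum>w\<in>side f (other_end sr tg f v). g w)"
      by (rule sum.UNION_disjoint) (use finEv finite_side sides_at_vertex_disjoint in auto)
    finally show ?thesis by simp
  qed
  also have "- (\<Sum>w\<in>V - {v}. g w) = g v"
    using tot v finV by (simp add: sum_diff1)
  finally show ?thesis .
qed

lemma heads_eq_if_net_inflow_eq:
  assumes h1: "\<forall>f\<in>E. h1 f = sr f \<or> h1 f = tg f" and h2: "\<forall>f\<in>E. h2 f = sr f \<or> h2 f = tg f"
    and eq: "\<forall>v\<in>V. net_inflow h1 v = net_inflow h2 v" and f: "f \<in> E"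
  shows "h1 f = h2 f"
proof -
  have sub: "side f (tg f) \<subseteq> V" using side_subset ends f by auto
  have "(\<Sum>v\<in>side f (tg f). net_inflow h1 v) = (\<Sum>v\<in>side f (tg f). net_inflow h2 v)"
    using eq sub by (intro sum.cong) auto
  then have "(if h1 f = tg f then 1 else -1 :: int) = (if h2 f = tg f then 1 else -1)"
    using sum_net_inflow_side[OF h1 f, of "tg f"] sum_net_inflow_side[OF h2 f, of "tg f"] by simp
  then have "h1 f = tg f \<longleftrightarrow> h2 f = tg f" by (auto split: if_splits)
  then show ?thesis using h1 h2 f by metis
qed

end

section \<open>The dimension bound for connected pieces of a curve\<close>

text \<open>Along a path of edges, each step changes the position by a multiple of the edge slope
  whose coefficient is the edge length.\<close>
lemma component_pos_expansion:
  fixes U :: "nat \<Rightarrow> real \<times> real"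
  assumes "w \<in> component sr tg S x" "finite S"
  shows "\<exists>\<gamma>::nat\<Rightarrow>real. (\<forall>(q::nat \<Rightarrow> real \<times> real) ln. (\<forall>f\<in>S. q (tg f) - q (sr f) = ln f *\<^sub>R U f) \<longrightarrow>
            q w = q x + (\<Sum>f\<in>{f\<in>S. sr f \<in> component sr tg S x}. (\<gamma> f * ln f) *\<^sub>R U f))"
proof -
  let ?A = "{f\<in>S. sr f \<in> component sr tg S x}"
  have finA: "finite ?A" using assms(2) by auto
  have "(x, w) \<in> (edge_rel sr tg S)\<^sup>*" using assms(1) by (simp add: component_def)
  then show ?thesis
  proof (induction rule: rtrancl_induct)
    case base
    show ?case by (rule exI[of _ "\<lambda>_. 0"]) simp
  next
    case (step y z)
    then obtain \<gamma> where IH: "\<forall>(q::nat \<Rightarrow> real \<times> real) ln. (\<forall>f\<in>S. q (tg f) - q (sr f) = ln f *\<^sub>R U f) \<longrightarrow>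
            q y = q x + (\<Sum>f\<in>?A. (\<gamma> f * ln f) *\<^sub>R U f)" by blast
    have yR: "y \<in> component sr tg S x" using step.hyps(1) by (simp add: component_def)
    from step.hyps(2) obtain f where f: "f \<in> S" "(y = sr f \<and> z = tg f) \<or> (y = tg f \<and> z = sr f)"
      unfolding edge_rel_def by auto
    have fA: "f \<in> ?A" using component_edge_ends[OF yR f(1)] f by auto
    define \<epsilon> :: real where "\<epsilon> = (if y = sr f \<and> z = tg f then 1 else -1)"
    define \<gamma>' where "\<gamma>' = (\<lambda>g. \<gamma> g + (if g = f then \<epsilon> else 0))"
    show ?case
    proof (rule exI[of _ \<gamma>'], intro allI impI)
      fix q :: "nat \<Rightarrow> real \<times> real" and ln :: "nat \<Rightarrow> real"
      assume eqs: "\<forall>f\<in>S. q (tg f) - q (sr f) = ln f *\<^sub>R U f"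
      have zy: "q z = q y + (\<epsilon> * ln f) *\<^sub>R U f"
        using eqs f unfolding \<epsilon>_def by (auto simp: algebra_simps)
      have "(\<Sum>g\<in>?A. (\<gamma>' g * ln g) *\<^sub>R U g) = (\<Sum>g\<in>?A. (\<gamma> g * ln g) *\<^sub>R U g + (if g = f then (\<epsilon> * ln g) *\<^sub>R U g else 0))"
        by (rule sum.cong) (auto simp: \<gamma>'_def algebra_simps)
      also have "\<dots> = (\<Sum>g\<in>?A. (\<gamma> g * ln g) *\<^sub>R U g) + (\<Sum>g\<in>?A. (if g = f then (\<epsilon> * ln g) *\<^sub>R U g else 0))"
        by (rule sum.distrib)
      also have "(\<Sum>g\<in>?A. (if g = f then (\<epsilon> * ln g) *\<^sub>R U g else 0)) = (\<epsilon> * ln f) *\<^sub>R U f"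
        using fA finA by (simp add: sum.delta)
      finally have sg: "(\<Sum>g\<in>?A. (\<gamma>' g * ln g) *\<^sub>R U g) = (\<Sum>g\<in>?A. (\<gamma> g * ln g) *\<^sub>R U g) + (\<epsilon> * ln f) *\<^sub>R U f" .
      have "q y = q x + (\<Sum>f\<in>?A. (\<gamma> f * ln f) *\<^sub>R U f)" using IH eqs by blast
      with zy sg show "q z = q x + (\<Sum>g\<in>?A. (\<gamma>' g * ln g) *\<^sub>R U g)" by (simp add: algebra_simps)
    qed
  qed
qed

lemma concat_pairs_len: "length (concat (map (\<lambda>i. [f i, g i]) [1..<m+1])) = 2 * m"
  by (induction m) auto

lemma concat_pairs_nth:
  "k < 2 * m \<Longrightarrow> concat (map (\<lambda>i. [f i, g i]) [1..<m+1]) ! k = (if even k then f (k div 2 + 1) else g (k div 2 + 1))"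
proof (induction m arbitrary: k)
  case 0 then show ?case by simp
next
  case (Suc m)
  have len: "length (concat (map (\<lambda>i. [f i, g i]) [1..<m+1])) = 2 * m"
    by (rule concat_pairs_len)
  have up: "[1..<Suc m + 1] = [1..<m+1] @ [m+1]" by simp
  have e: "concat (map (\<lambda>i. [f i, g i]) [1..<Suc m + 1]) = concat (map (\<lambda>i. [f i, g i]) [1..<m+1]) @ [f (m+1), g (m+1)]"
    unfolding up by simp
  show ?case
  proof (cases "k < 2 * m")
    case True then show ?thesis unfolding e nth_append len using Suc.IH by simp
  next
    case False
    then have "k = 2 * m \<or> k = 2 * m + 1" using Suc.prems by auto
    then show ?thesis unfolding e nth_append len by auto
  qed
qed

text \<open>Coordinate \<open>k\<close> of \<open>ev_coords\<close> is a linear form (\<open>coord_form\<close>) applied to the position of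
  a vertex (\<open>coord_vertex\<close>): a coordinate of a marking, or \<open>det2 v\<^sub>j\<close> at the vertex of a fixed end.\<close>
definition coord_vertex :: "nat \<Rightarrow> nat \<Rightarrow> nat set \<Rightarrow> curve \<Rightarrow> nat \<Rightarrow> nat" where
  "coord_vertex r s F C k =
     (if k < 2*(r+s) then c_mark C (k div 2 + 1) else c_endv C (sorted_list_of_set F ! (k - 2*(r+s))))"

definition coord_form :: "nat \<Rightarrow> nat \<Rightarrow> (int \<times> int) list \<Rightarrow> nat set \<Rightarrow> nat \<Rightarrow> real \<times> real \<Rightarrow> real" where
  "coord_form r s \<Delta> F k p =
     (if k < 2*(r+s) then (if even k then fst p else snd p)
      else det2 (vvec \<Delta> (sorted_list_of_set F ! (k - 2*(r+s)))) p)"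

lemma linear_coord_form: "linear (coord_form r s \<Delta> F k)"
  by (rule linearI) (auto simp: coord_form_def det2_def algebra_simps)

lemma coord_form_affine:
  "coord_form r s \<Delta> F k (p + (\<Sum>f\<in>A. c f *\<^sub>R u f))
   = fst p * coord_form r s \<Delta> F k (1, 0) + snd p * coord_form r s \<Delta> F k (0, 1)
     + (\<Sum>f\<in>A. c f * coord_form r s \<Delta> F k (u f))"
proof -
  note lin = linear_coord_form[of r s \<Delta> F k]
  have "coord_form r s \<Delta> F k p = fst p * coord_form r s \<Delta> F k (1, 0) + snd p * coord_form r s \<Delta> F k (0, 1)"
    by (simp add: coord_form_def det2_def)
  then show ?thesis by (simp add: linear_add[OF lin] linear_sum[OF lin] linear_scale[OF lin])
qed

lemma ev_coords_nth:
  assumes "finite F" "k < 2*(r+s) + card F"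
  shows "ev_coords r s \<Delta> F C ! k = coord_form r s \<Delta> F k (c_pos C (coord_vertex r s F C k))"
proof (cases "k < 2*(r+s)")
  case True
  have "concat (map (\<lambda>i. [fst (c_pos C (c_mark C i)), snd (c_pos C (c_mark C i))]) [1..<r+s+1]) ! k
    = (if even k then fst (c_pos C (c_mark C (k div 2 + 1))) else snd (c_pos C (c_mark C (k div 2 + 1))))"
    by (rule concat_pairs_nth[OF True])
  then show ?thesis
    unfolding ev_coords_def nth_append concat_pairs_len using True
    by (simp add: coord_form_def coord_vertex_def)
next
  case False
  then show ?thesis using assms
    unfolding ev_coords_def nth_append concat_pairs_len by (simp add: coord_form_def coord_vertex_def)
qed

lemma card_sorted_list_of_set_indices:
  assumes "finite F"
  shows "card {t. t < card F \<and> P (sorted_list_of_set F ! t)} = card {j\<in>F. P j}"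
proof -
  define L where "L = sorted_list_of_set F"
  have L: "set L = F" "length L = card F" "distinct L" using assms by (auto simp: L_def)
  have "{j\<in>F. P j} = (!) L ` {t. t < length L \<and> P (L ! t)}"
    by (auto simp: in_set_conv_nth simp flip: L(1))
  moreover have "inj_on ((!) L) {t. t < length L \<and> P (L ! t)}"
    by (rule inj_on_nth) (auto simp: L)
  ultimately show ?thesis by (simp add: card_image L_def)
qed

lemma card_coord_vertex_in:
  assumes "finite F"
  shows "card {k. k < 2*(r+s) + card F \<and> coord_vertex r s F C k \<in> T}
       = 2 * card {i\<in>{1..r+s}. c_mark C i \<in> T} + card {j\<in>F. c_endv C j \<in> T}"
proof -
  let ?L = "sorted_list_of_set F"
  let ?M = "{i\<in>{1..r+s}. c_mark C i \<in> T}"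
  let ?G = "{t. t < card F \<and> c_endv C (?L ! t) \<in> T}"
  \<comment> \<open>marking \<open>i\<close> owns the coordinates \<open>2i - 2\<close> and \<open>2i - 1\<close>\<close>
  have "{k. k < 2*(r+s) + card F \<and> coord_vertex r s F C k \<in> T}
     = ((\<lambda>i. 2*i - 2) ` ?M \<union> (\<lambda>i. 2*i - 1) ` ?M) \<union> (\<lambda>t. 2*(r+s) + t) ` ?G"
  proof (rule set_eqI, rule iffI)
    fix k assume k: "k \<in> {k. k < 2*(r+s) + card F \<and> coord_vertex r s F C k \<in> T}"
    show "k \<in> ((\<lambda>i. 2*i - 2) ` ?M \<union> (\<lambda>i. 2*i - 1) ` ?M) \<union> (\<lambda>t. 2*(r+s) + t) ` ?G"
    proof (cases "k < 2*(r+s)")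
      case True
      then have "k div 2 + 1 \<in> ?M" using k by (auto simp: coord_vertex_def)
      moreover have "k = 2 * (k div 2 + 1) - 2 \<or> k = 2 * (k div 2 + 1) - 1" by presburger
      ultimately show ?thesis by blast
    next
      case False
      then have "k - 2*(r+s) \<in> ?G" "k = 2*(r+s) + (k - 2*(r+s))"
        using k by (auto simp: coord_vertex_def)
      then show ?thesis by blast
    qed
  next
    have half: "(2*i - 2) div 2 + 1 = i" "(2*i - 1) div 2 + 1 = i" if "i \<ge> 1" for i :: nat
      using that by presburger+
    fix k assume "k \<in> ((\<lambda>i. 2*i - 2) ` ?M \<union> (\<lambda>i. 2*i - 1) ` ?M) \<union> (\<lambda>t. 2*(r+s) + t) ` ?G"
    then show "k \<in> {k. k < 2*(r+s) + card F \<and> coord_vertex r s F C k \<in> T}"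
      using half by (auto simp: coord_vertex_def)
  qed
  moreover have "card ((\<lambda>i. 2*i - 2) ` ?M \<union> (\<lambda>i. 2*i - 1) ` ?M) = 2 * card ?M"
  proof -
    have "(\<lambda>i. 2*i - 2) ` ?M \<inter> (\<lambda>i. 2*i - 1) ` ?M = {}" by auto presburger
    moreover have "card ((\<lambda>i. 2*i - 2) ` ?M) = card ?M" "card ((\<lambda>i. 2*i - 1) ` ?M) = card ?M"
      by (auto intro!: card_image simp: inj_on_def)
    ultimately show ?thesis by (simp add: card_Un_disjoint)
  qed
  moreover have "card ((\<lambda>t. 2*(r+s) + t) ` ?G) = card {j\<in>F. c_endv C j \<in> T}"
    using card_sorted_list_of_set_indices[OF assms] by (simp add: card_image)
  moreover have "((\<lambda>i. 2*i - 2) ` ?M \<union> (\<lambda>i. 2*i - 1) ` ?M) \<inter> (\<lambda>t. 2*(r+s) + t) ` ?G = {}"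
    by auto
  ultimately show ?thesis by (simp add: card_Un_disjoint)
qed

lemma graph_match_edge_displacement:
  assumes D: "is_curve r s \<Delta> D" and gm: "graph_match r s \<Delta> C D \<phi> \<psi>" and f: "f \<in> c_edges C"
  shows "c_pos D (\<phi> (c_tgt C f)) - c_pos D (\<phi> (c_src C f)) = c_len D (\<psi> f) *\<^sub>R rvec (c_dir C f)"
proof -
  have "\<psi> f \<in> c_edges D" using gm f unfolding graph_match_def bij_betw_def by auto
  then have eq: "c_pos D (c_tgt D (\<psi> f)) - c_pos D (c_src D (\<psi> f)) = c_len D (\<psi> f) *\<^sub>R rvec (c_dir D (\<psi> f))"
    using D unfolding is_curve_def by auto
  from gm f consider
      "c_src D (\<psi> f) = \<phi> (c_src C f)" "c_tgt D (\<psi> f) = \<phi> (c_tgt C f)" "c_dir D (\<psi> f) = c_dir C f"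
    | "c_src D (\<psi> f) = \<phi> (c_tgt C f)" "c_tgt D (\<psi> f) = \<phi> (c_src C f)" "c_dir D (\<psi> f) = - c_dir C f"
    unfolding graph_match_def by blast
  then show ?thesis
  proof cases
    case 2
    have "rvec (- u) = - rvec u" for u by (simp add: rvec_def)
    with eq 2 have "c_pos D (\<phi> (c_src C f)) - c_pos D (\<phi> (c_tgt C f)) = - (c_len D (\<psi> f) *\<^sub>R rvec (c_dir C f))"
      by simp
    then show ?thesis by (simp add: algebra_simps)
  qed (use eq in simp)
qed

lemma graph_match_coord_vertex:
  assumes gm: "graph_match r s \<Delta> C D \<phi> \<psi>" and F: "finite F" "F \<subseteq> {1..length \<Delta>}"
    and k: "k < 2*(r+s) + card F"
  shows "coord_vertex r s F D k = \<phi> (coord_vertex r s F C k)"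
proof (cases "k < 2*(r+s)")
  case True
  then show ?thesis using gm unfolding graph_match_def coord_vertex_def by auto
next
  case False
  then have "sorted_list_of_set F ! (k - 2*(r+s)) \<in> F"
    using F k by (metis add_diff_inverse_nat length_sorted_list_of_set nat_add_left_cancel_less
        nth_mem set_sorted_list_of_set)
  with False show ?thesis using gm F unfolding graph_match_def coord_vertex_def by auto
qed

text \<open>Parameters \<open>0, 1\<close> are the coordinates of the base point \<open>x\<close>, parameter \<open>f + 2\<close> is the
  length of the non-contracted edge \<open>f\<close>; the coefficients \<open>A\<close> are constant on the cell.\<close>
lemma cell_ev_coords_factor:
  fixes x :: nat
  assumes C: "is_curve r s \<Delta> C" and F: "finite F" "F \<subseteq> {1..length \<Delta>}" and S: "S \<subseteq> c_edges C"
  defines "T \<equiv> component (c_src C) (c_tgt C) S x"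
  shows "\<exists>A. \<forall>p \<in> ev_coords r s \<Delta> F ` cell r s \<Delta> C. \<exists>val.
           \<forall>k \<in> {k. k < 2*(r+s) + card F \<and> coord_vertex r s F C k \<in> T}.
             p ! k = (\<Sum>\<pi> \<in> insert 0 (insert 1 ((\<lambda>f. f + 2) ` {f\<in>S. c_dir C f \<noteq> 0 \<and> c_src C f \<in> T})).
                        A \<pi> k * val \<pi>)"
proof -
  define Snc where "Snc = {f\<in>S. c_dir C f \<noteq> 0 \<and> c_src C f \<in> T}"
  define ST where "ST = {f\<in>S. c_src C f \<in> T}"
  define U where "U f = rvec (c_dir C f)" for f
  define cf where "cf = coord_form r s \<Delta> F"
  define cv where "cv = coord_vertex r s F C"
  have finS: "finite S" using C S finite_subset by (auto simp: is_curve_def)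
  have "\<forall>w\<in>T. \<exists>\<gamma>. \<forall>(q::nat \<Rightarrow> real \<times> real) ln.
          (\<forall>f\<in>S. q (c_tgt C f) - q (c_src C f) = ln f *\<^sub>R U f) \<longrightarrow>
          q w = q x + (\<Sum>f\<in>ST. (\<gamma> f * ln f) *\<^sub>R U f)"
    using component_pos_expansion finS unfolding T_def ST_def by blast
  from bchoice[OF this] obtain gam where gam: "\<forall>w\<in>T. \<forall>(q::nat \<Rightarrow> real \<times> real) ln.
          (\<forall>f\<in>S. q (c_tgt C f) - q (c_src C f) = ln f *\<^sub>R U f) \<longrightarrow>
          q w = q x + (\<Sum>f\<in>ST. (gam w f * ln f) *\<^sub>R U f)" ..
  define A where "A \<pi> k = (if \<pi> = 0 then cf k (1, 0) else if \<pi> = 1 then cf k (0, 1)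
                           else gam (cv k) (\<pi> - 2) * cf k (U (\<pi> - 2)))" for \<pi> k
  have "\<exists>val. \<forall>k \<in> {k. k < 2*(r+s) + card F \<and> cv k \<in> T}.
          p ! k = (\<Sum>\<pi> \<in> insert 0 (insert 1 ((\<lambda>f. f + 2) ` Snc)). A \<pi> k * val \<pi>)"
    if "p \<in> ev_coords r s \<Delta> F ` cell r s \<Delta> C" for p
  proof -
    obtain D where D: "is_curve r s \<Delta> D" "same_type r s \<Delta> C D" "p = ev_coords r s \<Delta> F D"
      using \<open>p \<in> _\<close> by (auto simp: cell_def)
    then obtain \<phi> \<psi> where gm: "graph_match r s \<Delta> C D \<phi> \<psi>" by (auto simp: same_type_def)
    define q where "q v = c_pos D (\<phi> v)" for v
    define ln where "ln f = c_len D (\<psi> f)" for f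
    define val where "val \<pi> = (if \<pi> = 0 then fst (q x) else if \<pi> = 1 then snd (q x) else ln (\<pi> - 2))" for \<pi>
    have eqs: "\<forall>f\<in>S. q (c_tgt C f) - q (c_src C f) = ln f *\<^sub>R U f"
      using graph_match_edge_displacement[OF D(1) gm] S unfolding q_def ln_def U_def by auto
    have "p ! k = (\<Sum>\<pi> \<in> insert 0 (insert 1 ((\<lambda>f. f + 2) ` Snc)). A \<pi> k * val \<pi>)"
      if k: "k < 2*(r+s) + card F" "cv k \<in> T" for k
    proof -
      have "p ! k = cf k (q (cv k))"
        using ev_coords_nth[OF F(1) k(1)] graph_match_coord_vertex[OF gm F k(1)]
        by (simp add: D(3) q_def cf_def cv_def)
      also have "\<dots> = cf k (q x + (\<Sum>f\<in>ST. (gam (cv k) f * ln f) *\<^sub>R U f))"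
        using gam k(2) eqs by simp
      also have "\<dots> = fst (q x) * cf k (1, 0) + snd (q x) * cf k (0, 1)
                      + (\<Sum>f\<in>ST. gam (cv k) f * ln f * cf k (U f))"
        unfolding cf_def by (rule coord_form_affine)
      also have "(\<Sum>f\<in>ST. gam (cv k) f * ln f * cf k (U f)) = (\<Sum>f\<in>Snc. gam (cv k) f * ln f * cf k (U f))"
        \<comment> \<open>contracted edges have slope \<open>0\<close>\<close>
        using finS linear_0[OF linear_coord_form] unfolding cf_def
        by (intro sum.mono_neutral_right) (auto simp: Snc_def ST_def U_def rvec_def zero_prod_def)
      also have "\<dots> = (\<Sum>\<pi>\<in>(\<lambda>f. f + 2) ` Snc. A \<pi> k * val \<pi>)"
        by (subst sum.reindex) (auto simp: inj_on_def A_def val_def mult_ac)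
      moreover have "0 \<notin> insert 1 ((\<lambda>f. f + 2) ` Snc)" "1 \<notin> (\<lambda>f. f + 2) ` Snc" by auto
      moreover have "finite Snc" using finS by (simp add: Snc_def)
      ultimately show ?thesis by (simp add: A_def val_def)
    qed
    then show ?thesis by auto
  qed
  then show ?thesis unfolding Snc_def cv_def by blast
qed

lemma component_dimension_bound:
  assumes C: "is_curve r s \<Delta> C" and gp: "gen_pos r s \<Delta> F P" and ev: "ev_eq r s \<Delta> F C P"
    and F: "finite F" "F \<subseteq> {1..length \<Delta>}" and S: "S \<subseteq> c_edges C"
  shows "2 * card {i\<in>{1..r+s}. c_mark C i \<in> component (c_src C) (c_tgt C) S x}
         + card {j\<in>F. c_endv C j \<in> component (c_src C) (c_tgt C) S x}
         \<le> 2 + card {f\<in>S. c_dir C f \<noteq> 0 \<and> c_src C f \<in> component (c_src C) (c_tgt C) S x}"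
proof (rule ccontr)
  let ?N = "2*(r+s) + card F"
  let ?T = "component (c_src C) (c_tgt C) S x"
  let ?K = "{k. k < ?N \<and> coord_vertex r s F C k \<in> ?T}"
  let ?Snc = "{f\<in>S. c_dir C f \<noteq> 0 \<and> c_src C f \<in> ?T}"
  let ?Q = "insert 0 (insert 1 ((\<lambda>f. f + 2) ` ?Snc))"
  assume big: "\<not> ?thesis"
  have finS: "finite S" using C S finite_subset by (auto simp: is_curve_def)
  have "card ?K = 2 * card {i\<in>{1..r+s}. c_mark C i \<in> ?T} + card {j\<in>F. c_endv C j \<in> ?T}"
    by (rule card_coord_vertex_in[OF F(1)])
  moreover have "card ?Q \<le> 2 + card ?Snc"
    using card_image_le[of ?Snc "\<lambda>f. f + 2"] finS by (simp add: card_insert_if)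
  ultimately have "card ?Q < card ?K" using big by linarith
  obtain A where factor: "\<forall>p \<in> ev_coords r s \<Delta> F ` cell r s \<Delta> C. \<exists>val.
      \<forall>k \<in> ?K. p ! k = (\<Sum>\<pi>\<in>?Q. A \<pi> k * val \<pi>)"
    using cell_ev_coords_factor[OF C F S] by blast
  have "finite ?Q" using finS by simp
  have "\<not> dim_ge ?N (ev_coords r s \<Delta> F ` cell r s \<Delta> C) ?N"
  proof (rule not_dim_ge_if_coords_factor[where A = A, OF _ _ \<open>finite ?Q\<close> \<open>card ?Q < card ?K\<close>])
    fix p assume "p \<in> ev_coords r s \<Delta> F ` cell r s \<Delta> C"
    then show "\<exists>val. \<forall>k\<in>?K. p ! k = (\<Sum>\<pi>\<in>?Q. A \<pi> k * val \<pi>)" using factor by blast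
  qed auto
  then show False using gp C ev unfolding gen_pos_def by blast
qed

lemma is_curve_tree: "is_curve r s \<Delta> C \<Longrightarrow> tree (c_verts C) (c_edges C) (c_src C) (c_tgt C)"
  unfolding tree_def is_curve_def by (simp add: adj_rel_def edge_rel_def)

locale constrained_curve =
  fixes r s :: nat and \<Delta> :: "(int \<times> int) list" and F :: "nat set"
    and P :: "(nat \<Rightarrow> real \<times> real) \<times> (nat \<Rightarrow> real \<times> real)" and C :: curve
  assumes curve: "is_curve r s \<Delta> C" and gen_pos: "gen_pos r s \<Delta> F P" and ev: "ev_eq r s \<Delta> F C P"
    and F_sub: "F \<subseteq> {1..length \<Delta>}"
begin

sublocale tree "c_verts C" "c_edges C" "c_src C" "c_tgt C"
  by (rule is_curve_tree[OF curve])

lemma finite_F: "finite F"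
  using F_sub finite_subset by blast

lemma mark_in_verts: "i \<in> {1..r+s} \<Longrightarrow> c_mark C i \<in> c_verts C"
  using curve by (auto simp: is_curve_def)

lemma endv_in_verts: "j \<in> {1..length \<Delta>} \<Longrightarrow> c_endv C j \<in> c_verts C"
  using curve by (auto simp: is_curve_def)

lemma component_bound:
  "S \<subseteq> c_edges C \<Longrightarrow>
   2 * card {i\<in>{1..r+s}. c_mark C i \<in> component (c_src C) (c_tgt C) S x}
     + card {j\<in>F. c_endv C j \<in> component (c_src C) (c_tgt C) S x}
   \<le> 2 + card {f\<in>S. c_dir C f \<noteq> 0 \<and> c_src C f \<in> component (c_src C) (c_tgt C) S x}"
  by (rule component_dimension_bound[OF curve gen_pos ev finite_F F_sub])

lemma card_marks_at_le_1: "card (marks_at r s C v) \<le> 1"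
proof -
  have "component (c_src C) (c_tgt C) {} v = {v}" unfolding component_def edge_rel_def by auto
  then show ?thesis using component_bound[of "{}" v] by (simp add: marks_at_def)
qed

lemma card_marks_at_eq_1:
  assumes "marks_at r s C v \<noteq> {}" shows "card (marks_at r s C v) = 1"
proof -
  have "finite (marks_at r s C v)" by (simp add: marks_at_def)
  with assms have "card (marks_at r s C v) \<noteq> 0" by simp
  with card_marks_at_le_1[of v] show ?thesis by linarith
qed

lemma marks_at_eq_singleton:
  assumes "i \<in> {1..r+s}" "c_mark C i = v" shows "marks_at r s C v = {i}"
proof -
  have "i \<in> marks_at r s C v" using assms by (simp add: marks_at_def)
  moreover have "finite (marks_at r s C v)" by (simp add: marks_at_def)
  ultimately show ?thesis using card_marks_at_le_1 card_le_Suc0_iff_eq[of "marks_at r s C v"] by auto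
qed

lemma contracted_edge_has_unmarked_end:
  assumes f: "f \<in> c_edges C" "c_dir C f = 0"
  shows "marks_at r s C (c_src C f) = {} \<or> marks_at r s C (c_tgt C f) = {}"
proof (rule ccontr)
  let ?R = "component (c_src C) (c_tgt C) {f} (c_src C f)"
  assume "\<not> ?thesis"
  then obtain i j where i: "i \<in> {1..r+s}" "c_mark C i = c_src C f"
    and j: "j \<in> {1..r+s}" "c_mark C j = c_tgt C f"
    by (auto simp: marks_at_def)
  have "c_src C f \<in> ?R" "c_tgt C f \<in> ?R"
    using component_edge_ends[of "c_src C f" "c_src C" "c_tgt C" "{f}" "c_src C f" f] by auto
  then have "{i, j} \<subseteq> {i\<in>{1..r+s}. c_mark C i \<in> ?R}" using i j by auto
  moreover have "i \<noteq> j" using i j ends f by auto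
  ultimately have "2 \<le> card {i\<in>{1..r+s}. c_mark C i \<in> ?R}"
    using card_mono[of "{i\<in>{1..r+s}. c_mark C i \<in> ?R}" "{i, j}"] by simp
  moreover have "card {g\<in>{f}. c_dir C g \<noteq> 0 \<and> c_src C g \<in> ?R} = 0" using f by auto
  moreover have "2 * card {i\<in>{1..r+s}. c_mark C i \<in> ?R} + card {j\<in>F. c_endv C j \<in> ?R}
      \<le> 2 + card {g\<in>{f}. c_dir C g \<noteq> 0 \<and> c_src C g \<in> ?R}"
    using component_bound[of "{f}" "c_src C f"] f by simp
  ultimately show False by linarith
qed

lemma card_non_contracted_edges_ge: "2 * (r + s) + card F \<le> 2 + card {f\<in>c_edges C. c_dir C f \<noteq> 0}"
proof -
  obtain x where x: "x \<in> c_verts C" using curve by (auto simp: is_curve_def)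
  have "{i\<in>{1..r+s}. c_mark C i \<in> c_verts C} = {1..r+s}" using mark_in_verts by auto
  moreover have "{j\<in>F. c_endv C j \<in> c_verts C} = F" using endv_in_verts F_sub by auto
  moreover have "{f\<in>c_edges C. c_dir C f \<noteq> 0 \<and> c_src C f \<in> c_verts C} = {f\<in>c_edges C. c_dir C f \<noteq> 0}"
    using ends by auto
  ultimately show ?thesis using component_bound[of "c_edges C" x] unfolding component_all[OF x] by simp
qed

lemma side_bound:
  assumes "e \<in> c_edges C"
  shows "2 * card {i\<in>{1..r+s}. c_mark C i \<in> side e u} + card {j\<in>F. c_endv C j \<in> side e u}
     \<le> 2 + card {f\<in>c_edges C - {e}. c_dir C f \<noteq> 0 \<and> c_src C f \<in> side e u}"
  unfolding side_def by (rule component_bound) auto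

end

section \<open>Vertex types as a flow condition\<close>

text \<open>The net number of incoming bounded edges that the vertex types (I), (II), (III) prescribe at
  \<open>v\<close>, once all bounded edges are non-contracted and exactly the ends in \<open>F\<close> point inwards.\<close>
definition broccoli_inflow :: "nat \<Rightarrow> nat \<Rightarrow> (int \<times> int) list \<Rightarrow> nat set \<Rightarrow> curve \<Rightarrow> nat \<Rightarrow> int" where
  "broccoli_inflow r s \<Delta> F C v = 4 - int (card (edges_at C v)) - 4 * int (card (marks_at r s C v))
     - 2 * int (card {j\<in>ends_at \<Delta> C v. j \<in> F})"

context constrained_curve
begin

lemma finite_edges_at: "finite (edges_at C v)"
  using finE by (simp add: edges_at_def)

lemma finite_ends_at: "finite (ends_at \<Delta> C v)"
  by (simp add: ends_at_def)

lemma nc_edges_at_eq_edges_at: "\<forall>f\<in>c_edges C. c_dir C f \<noteq> 0 \<Longrightarrow> nc_edges_at C v = edges_at C v"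
  by (auto simp: nc_edges_at_def edges_at_def)

lemma e_head_iff_not_e_tail: "f \<in> edges_at C v \<Longrightarrow> e_head C ori f = v \<longleftrightarrow> e_tail C ori f \<noteq> v"
  using ends by (auto simp: edges_at_def e_head_def e_tail_def)

lemma card_heads_add_card_tails:
  assumes "X \<subseteq> edges_at C v"
  shows "card {f\<in>X. e_head C ori f = v} + card {f\<in>X. e_tail C ori f = v} = card X"
proof -
  have "finite X" using assms finite_edges_at finite_subset by blast
  moreover have "X = {f\<in>X. e_head C ori f = v} \<union> {f\<in>X. e_tail C ori f = v}"
    "{f\<in>X. e_head C ori f = v} \<inter> {f\<in>X. e_tail C ori f = v} = {}"
    using e_head_iff_not_e_tail assms by blast+
  ultimately show ?thesis by (metis card_Un_disjoint finite_Un)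
qed

lemma card_in_ends_add_card_out_ends:
  "card {j\<in>ends_at \<Delta> C v. snd ori j} + card {j\<in>ends_at \<Delta> C v. \<not> snd ori j} = card (ends_at \<Delta> C v)"
proof -
  have "ends_at \<Delta> C v = {j\<in>ends_at \<Delta> C v. snd ori j} \<union> {j\<in>ends_at \<Delta> C v. \<not> snd ori j}" by auto
  then show ?thesis
    using finite_ends_at card_Un_disjoint[of "{j\<in>ends_at \<Delta> C v. snd ori j}" "{j\<in>ends_at \<Delta> C v. \<not> snd ori j}"]
    by (metis (no_types, lifting) disjoint_iff finite_Un mem_Collect_eq)
qed

lemma in_ends_eq_fixed:
  "fixed_ends \<Delta> ori = F \<Longrightarrow> {j\<in>ends_at \<Delta> C v. snd ori j} = {j\<in>ends_at \<Delta> C v. j \<in> F}"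
  by (auto simp: fixed_ends_def ends_at_def)

lemma net_inflow_e_head:
  "net_inflow (e_head C ori) v
   = int (card {f\<in>edges_at C v. e_head C ori f = v}) - int (card {f\<in>edges_at C v. e_tail C ori f = v})"
proof -
  have "{f\<in>c_edges C. e_head C ori f = v} = {f\<in>edges_at C v. e_head C ori f = v}"
    by (auto simp: edges_at_def e_head_def)
  moreover have "{f\<in>c_edges C. (c_src C f = v \<or> c_tgt C f = v) \<and> e_head C ori f \<noteq> v}
      = {f\<in>edges_at C v. e_tail C ori f = v}"
    using ends by (auto simp: edges_at_def e_head_def e_tail_def)
  ultimately show ?thesis by (simp add: net_inflow_def)
qed

lemma num_in_add_num_out: "num_in \<Delta> C ori v + num_out \<Delta> C ori v = num_nc \<Delta> C v"
  using card_heads_add_card_tails[of "nc_edges_at C v" v ori] card_in_ends_add_card_out_ends[of v ori]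
  unfolding num_in_def num_out_def num_nc_def nc_edges_at_def by auto

lemma all_outgoing_iff:
  assumes "nc_edges_at C v = edges_at C v"
  shows "all_outgoing \<Delta> C ori v \<longleftrightarrow>
         card {f\<in>edges_at C v. e_head C ori f = v} = 0 \<and> card {j\<in>ends_at \<Delta> C v. snd ori j} = 0"
  using assms e_head_iff_not_e_tail finite_edges_at finite_ends_at
  unfolding all_outgoing_def by auto

lemma marked_all_outgoing_iff_net_inflow:
  assumes nc: "nc_edges_at C v = edges_at C v" and marked: "marks_at r s C v \<noteq> {}"
    and fe: "fixed_ends \<Delta> ori = F"
  shows "all_outgoing \<Delta> C ori v \<longleftrightarrow> net_inflow (e_head C ori) v = broccoli_inflow r s \<Delta> F C v"
proof -
  note card_marks_at_eq_1[OF marked]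
  moreover note all_outgoing_iff[OF nc, of ori] net_inflow_e_head[of ori v]
    card_heads_add_card_tails[OF subset_refl, of v ori]
  ultimately show ?thesis
    unfolding broccoli_inflow_def in_ends_eq_fixed[OF fe, symmetric] by auto
qed

lemma unmarked_type_II_iff_net_inflow:
  assumes nc: "nc_edges_at C v = edges_at C v" and unmarked: "marks_at r s C v = {}"
    and val: "valence r s \<Delta> C v = 3" and fe: "fixed_ends \<Delta> ori = F"
  shows "num_in \<Delta> C ori v = 2 \<and> num_out \<Delta> C ori v = 1
         \<longleftrightarrow> net_inflow (e_head C ori) v = broccoli_inflow r s \<Delta> F C v"
proof -
  have "card (edges_at C v) + card (ends_at \<Delta> C v) = 3" using val unmarked by (simp add: valence_def)
  then show ?thesis
    using net_inflow_e_head[of ori v] card_heads_add_card_tails[OF subset_refl, of v ori]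
      card_in_ends_add_card_out_ends[of v ori] unmarked
    unfolding broccoli_inflow_def in_ends_eq_fixed[OF fe, symmetric] num_in_def num_out_def nc
    by auto
qed

lemma oriented_broccoli_unmarked:
  assumes ob: "oriented_broccoli r s \<Delta> C ori" and v: "v \<in> c_verts C"
    and unmarked: "marks_at r s C v = {}"
  shows "valence r s \<Delta> C v = 3 \<and> num_in \<Delta> C ori v = 2 \<and> num_out \<Delta> C ori v = 1
         \<and> nc_edges_at C v = edges_at C v"
proof -
  have type_II: "valence r s \<Delta> C v = 3" "num_in \<Delta> C ori v = 2" "num_out \<Delta> C ori v = 1"
    using ob v unmarked unfolding oriented_broccoli_def marks_at_def by fastforce+
  then have "card (nc_edges_at C v) = card (edges_at C v)"
    using num_in_add_num_out[of ori v] unmarked by (simp add: num_nc_def valence_def)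
  moreover have "nc_edges_at C v \<subseteq> edges_at C v" by (auto simp: nc_edges_at_def)
  ultimately show ?thesis using type_II finite_edges_at by (simp add: card_subset_eq)
qed

lemma oriented_broccoli_non_contracted:
  assumes ob: "oriented_broccoli r s \<Delta> C ori"
  shows "\<forall>f\<in>c_edges C. c_dir C f \<noteq> 0"
proof (intro ballI notI)
  fix f assume f: "f \<in> c_edges C" "c_dir C f = 0"
  then obtain v where v: "v = c_src C f \<or> v = c_tgt C f" "marks_at r s C v = {}"
    using contracted_edge_has_unmarked_end by blast
  then have "nc_edges_at C v = edges_at C v"
    using oriented_broccoli_unmarked[OF ob] ends f by blast
  moreover have "f \<in> edges_at C v" "f \<notin> nc_edges_at C v"
    using f v by (auto simp: edges_at_def nc_edges_at_def)
  ultimately show False by blast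
qed

lemma oriented_broccoli_marked:
  assumes ob: "oriented_broccoli r s \<Delta> C ori" and v: "v \<in> c_verts C"
    and marked: "marks_at r s C v \<noteq> {}"
  shows "((\<exists>i \<in> {1..r}. c_mark C i = v) \<and> num_nc \<Delta> C v = 2 \<or>
          (\<exists>i \<in> {r+1..r+s}. c_mark C i = v) \<and> num_nc \<Delta> C v = 3) \<and> all_outgoing \<Delta> C ori v"
  using ob v marked unfolding oriented_broccoli_def by blast

theorem oriented_broccoli_imp_unoriented:
  assumes ob: "oriented_broccoli r s \<Delta> C ori"
  shows "unoriented_broccoli r s \<Delta> C"
  unfolding unoriented_broccoli_def
proof
  fix v assume v: "v \<in> c_verts C"
  show "valence r s \<Delta> C v = 3 \<and> (\<exists>i \<in> {1..r}. c_mark C i = v) \<or>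
        valence r s \<Delta> C v = 3 \<and> marks_at r s C v = {} \<or>
        valence r s \<Delta> C v = 4 \<and> (\<exists>i \<in> {r+1..r+s}. c_mark C i = v)"
  proof (cases "marks_at r s C v = {}")
    case True
    then show ?thesis using oriented_broccoli_unmarked[OF ob v] by blast
  next
    case False
    have "valence r s \<Delta> C v = num_nc \<Delta> C v + 1"
      using nc_edges_at_eq_edges_at[OF oriented_broccoli_non_contracted[OF ob]] card_marks_at_eq_1[OF False]
      by (simp add: valence_def num_nc_def)
    then show ?thesis using oriented_broccoli_marked[OF ob v False] by auto
  qed
qed

lemma oriented_broccoli_net_inflow:
  assumes ob: "oriented_broccoli r s \<Delta> C ori" and fe: "fixed_ends \<Delta> ori = F" and v: "v \<in> c_verts C"
  shows "net_inflow (e_head C ori) v = broccoli_inflow r s \<Delta> F C v"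
proof (cases "marks_at r s C v = {}")
  case True
  then show ?thesis
    using oriented_broccoli_unmarked[OF ob v] unmarked_type_II_iff_net_inflow[OF _ True _ fe] by blast
next
  case False
  then show ?thesis
    using oriented_broccoli_marked[OF ob v False] marked_all_outgoing_iff_net_inflow[OF _ False fe]
      nc_edges_at_eq_edges_at[OF oriented_broccoli_non_contracted[OF ob]] by blast
qed

section \<open>Existence of the orientation\<close>

lemma card_edges_at:
  "card (edges_at C v) = card {f\<in>c_edges C. c_src C f = v} + card {f\<in>c_edges C. c_tgt C f = v}"
proof -
  have "edges_at C v = {f\<in>c_edges C. c_src C f = v} \<union> {f\<in>c_edges C. c_tgt C f = v}"
    by (auto simp: edges_at_def)
  moreover have "{f\<in>c_edges C. c_src C f = v} \<inter> {f\<in>c_edges C. c_tgt C f = v} = {}" using ends by auto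
  ultimately show ?thesis using finE by (simp add: card_Un_disjoint)
qed

lemma sum_card_edges_at: "finite W \<Longrightarrow>
  (\<Sum>v\<in>W. card (edges_at C v)) = card {f\<in>c_edges C. c_src C f \<in> W} + card {f\<in>c_edges C. c_tgt C f \<in> W}"
  unfolding card_edges_at sum.distrib
  using sum_card_fibres[OF finE, of W "c_src C"] sum_card_fibres[OF finE, of W "c_tgt C"] by simp

lemma sum_card_marks_at:
  "finite W \<Longrightarrow> (\<Sum>v\<in>W. card (marks_at r s C v)) = card {i\<in>{1..r+s}. c_mark C i \<in> W}"
  unfolding marks_at_def by (rule sum_card_fibres) auto

lemma sum_card_ends_at:
  "finite W \<Longrightarrow> (\<Sum>v\<in>W. card (ends_at \<Delta> C v)) = card {j\<in>{1..length \<Delta>}. c_endv C j \<in> W}"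
  unfolding ends_at_def by (rule sum_card_fibres) auto

lemma sum_card_fixed_ends_at:
  assumes "finite W"
  shows "(\<Sum>v\<in>W. card {j\<in>ends_at \<Delta> C v. j \<in> F}) = card {j\<in>F. c_endv C j \<in> W}"
proof -
  have "{j\<in>ends_at \<Delta> C v. j \<in> F} = {j\<in>F. c_endv C j = v}" for v
    using F_sub by (auto simp: ends_at_def)
  then show ?thesis using sum_card_fibres[OF finite_F assms] by simp
qed

lemma sum_broccoli_inflow:
  assumes "finite W"
  shows "(\<Sum>v\<in>W. broccoli_inflow r s \<Delta> F C v) = 4 * int (card W)
     - int (card {f\<in>c_edges C. c_src C f \<in> W}) - int (card {f\<in>c_edges C. c_tgt C f \<in> W})
     - 4 * int (card {i\<in>{1..r+s}. c_mark C i \<in> W}) - 2 * int (card {j\<in>F. c_endv C j \<in> W})"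
proof -
  have "(\<Sum>v\<in>W. broccoli_inflow r s \<Delta> F C v) = 4 * int (card W)
      - int (\<Sum>v\<in>W. card (edges_at C v)) - 4 * int (\<Sum>v\<in>W. card (marks_at r s C v))
      - 2 * int (\<Sum>v\<in>W. card {j\<in>ends_at \<Delta> C v. j \<in> F})"
    by (simp add: broccoli_inflow_def sum_subtractf sum_distrib_left)
  then show ?thesis
    using sum_card_edges_at[OF assms] sum_card_marks_at[OF assms] sum_card_fixed_ends_at[OF assms]
    by simp
qed

lemma sum_valence:
  "(\<Sum>v\<in>c_verts C. valence r s \<Delta> C v) = 2 * card (c_edges C) + (r + s) + length \<Delta>"
proof -
  have "{f\<in>c_edges C. c_src C f \<in> c_verts C} = c_edges C" "{f\<in>c_edges C. c_tgt C f \<in> c_verts C} = c_edges C"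
    using ends by auto
  moreover have "{i\<in>{1..r+s}. c_mark C i \<in> c_verts C} = {1..r+s}" using mark_in_verts by auto
  moreover have "{j\<in>{1..length \<Delta>}. c_endv C j \<in> c_verts C} = {1..length \<Delta>}" using endv_in_verts by auto
  ultimately show ?thesis
    unfolding valence_def sum.distrib
    using sum_card_edges_at[OF finV] sum_card_marks_at[OF finV] sum_card_ends_at[OF finV] by simp
qed

lemma unoriented_broccoli_valence:
  assumes ub: "unoriented_broccoli r s \<Delta> C" and v: "v \<in> c_verts C"
  shows "valence r s \<Delta> C v = 3 + card {i\<in>{r+1..r+s}. c_mark C i = v}"
proof -
  have complex: "{i\<in>{r+1..r+s}. c_mark C i = v} = marks_at r s C v \<inter> {r+1..r+s}"
    by (auto simp: marks_at_def)
  from ub v consider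
      i where "valence r s \<Delta> C v = 3" "i \<in> {1..r}" "c_mark C i = v"
    | "valence r s \<Delta> C v = 3" "marks_at r s C v = {}"
    | i where "valence r s \<Delta> C v = 4" "i \<in> {r+1..r+s}" "c_mark C i = v"
    unfolding unoriented_broccoli_def by blast
  then show ?thesis
  proof cases
    case (1 i)
    then show ?thesis unfolding complex using marks_at_eq_singleton[of i v] by auto
  next
    case 2
    then show ?thesis unfolding complex by simp
  next
    case (3 i)
    then show ?thesis unfolding complex using marks_at_eq_singleton[of i v] by auto
  qed
qed

lemma unoriented_broccoli_card_edges:
  assumes ub: "unoriented_broccoli r s \<Delta> C" and dim: "r + 2 * s + card F + 1 = length \<Delta>"
  shows "card (c_edges C) + 2 = 2 * (r + s) + card F"
proof -
  have "(\<Sum>v\<in>c_verts C. card {i\<in>{r+1..r+s}. c_mark C i = v}) = card {i\<in>{r+1..r+s}. c_mark C i \<in> c_verts C}"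
    by (rule sum_card_fibres) (auto simp: finV)
  also have "{i\<in>{r+1..r+s}. c_mark C i \<in> c_verts C} = {r+1..r+s}" using mark_in_verts by auto
  finally have "(\<Sum>v\<in>c_verts C. valence r s \<Delta> C v) = 3 * card (c_verts C) + s"
    using unoriented_broccoli_valence[OF ub] by (simp add: sum.distrib)
  then show ?thesis using sum_valence cardVE dim by presburger
qed

text \<open>The dimension count leaves no room for contracted edges.\<close>
lemma non_contracted_if_card_edges:
  assumes "card (c_edges C) + 2 = 2 * (r + s) + card F"
  shows "\<forall>f\<in>c_edges C. c_dir C f \<noteq> 0"
proof -
  have "{f\<in>c_edges C. c_dir C f \<noteq> 0} = c_edges C"
    using card_non_contracted_edges_ge assms finE by (intro card_seteq) auto
  then show ?thesis by blast
qed

lemma sum_broccoli_inflow_verts: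
  assumes "card (c_edges C) + 2 = 2 * (r + s) + card F"
  shows "(\<Sum>v\<in>c_verts C. broccoli_inflow r s \<Delta> F C v) = 0"
proof -
  have "{f\<in>c_edges C. c_src C f \<in> c_verts C} = c_edges C" "{f\<in>c_edges C. c_tgt C f \<in> c_verts C} = c_edges C"
    using ends by auto
  moreover have "{i\<in>{1..r+s}. c_mark C i \<in> c_verts C} = {1..r+s}" using mark_in_verts by auto
  moreover have "{j\<in>F. c_endv C j \<in> c_verts C} = F" using endv_in_verts F_sub by auto
  ultimately show ?thesis using sum_broccoli_inflow[OF finV] assms cardVE by simp
qed

text \<open>The lower bound is the dimension bound for the side; oddness comes from its edge count.\<close>
lemma side_sum_broccoli_inflow:
  assumes nc: "\<forall>f\<in>c_edges C. c_dir C f \<noteq> 0"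
    and e: "e \<in> c_edges C" and u: "u = c_src C e \<or> u = c_tgt C e"
  shows "(\<Sum>v\<in>side e u. broccoli_inflow r s \<Delta> F C v) \<ge> -1 \<and> odd (\<Sum>v\<in>side e u. broccoli_inflow r s \<Delta> F C v)"
proof -
  let ?T = "side e u" and ?I = "{f\<in>c_edges C - {e}. c_src C f \<in> side e u}"
  define m where "m = card {i\<in>{1..r+s}. c_mark C i \<in> ?T}"
  define n where "n = card {j\<in>F. c_endv C j \<in> ?T}"
  have "{f\<in>c_edges C - {e}. c_dir C f \<noteq> 0 \<and> c_src C f \<in> ?T} = ?I" using nc by auto
  then have "2 * m + n \<le> 2 + card ?I" using side_bound[OF e, of u] by (simp add: m_def n_def)
  moreover have "(\<Sum>v\<in>?T. broccoli_inflow r s \<Delta> F C v) = 2 * (int (card ?I) + 1 - 2 * int m - int n) + 1"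
  proof -
    have "int (card {f\<in>c_edges C. c_src C f \<in> ?T}) + int (card {f\<in>c_edges C. c_tgt C f \<in> ?T})
        = 2 * int (card ?I) + 1"
      using arg_cong[OF card_side_endpoints[OF e u], of int] by simp
    then show ?thesis
      using sum_broccoli_inflow[OF finite_side[of e u]] card_side[OF e u] unfolding m_def n_def by simp
  qed
  ultimately show ?thesis by simp
qed

lemma side_sum_broccoli_inflow_unit:
  assumes card_E: "card (c_edges C) + 2 = 2 * (r + s) + card F" and e: "e \<in> c_edges C"
  shows "(\<Sum>v\<in>side e (c_tgt C e). broccoli_inflow r s \<Delta> F C v) \<in> {1, -1}"
proof -
  note nc = non_contracted_if_card_edges[OF card_E]
  have "(\<Sum>v\<in>side e (c_src C e). broccoli_inflow r s \<Delta> F C v)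
      + (\<Sum>v\<in>side e (c_tgt C e). broccoli_inflow r s \<Delta> F C v) = 0"
    using side_sum_split[OF e, of "broccoli_inflow r s \<Delta> F C"] sum_broccoli_inflow_verts[OF card_E] by simp
  moreover have "(\<Sum>v\<in>side e (c_src C e). broccoli_inflow r s \<Delta> F C v) \<ge> -1"
    using side_sum_broccoli_inflow[OF nc e] by blast
  moreover have "(\<Sum>v\<in>side e (c_tgt C e). broccoli_inflow r s \<Delta> F C v) \<ge> -1"
    "odd (\<Sum>v\<in>side e (c_tgt C e). broccoli_inflow r s \<Delta> F C v)"
    using side_sum_broccoli_inflow[OF nc e] by blast+
  ultimately show ?thesis by (cases "(\<Sum>v\<in>side e (c_tgt C e). broccoli_inflow r s \<Delta> F C v) = 0") auto
qed

lemma oriented_broccoli_if_net_inflow: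
  assumes ub: "unoriented_broccoli r s \<Delta> C" and nc: "\<forall>f\<in>c_edges C. c_dir C f \<noteq> 0"
    and fe: "fixed_ends \<Delta> ori = F"
    and flow: "\<forall>v\<in>c_verts C. net_inflow (e_head C ori) v = broccoli_inflow r s \<Delta> F C v"
  shows "oriented_broccoli r s \<Delta> C ori"
  unfolding oriented_broccoli_def
proof
  fix v assume v: "v \<in> c_verts C"
  note nc_eq = nc_edges_at_eq_edges_at[OF nc]
  have marked: "marks_at r s C v \<noteq> {}" if "i \<in> {1..r+s}" "c_mark C i = v" for i
    using that by (auto simp: marks_at_def)
  have val: "valence r s \<Delta> C v = num_nc \<Delta> C v + card (marks_at r s C v)"
    by (simp add: valence_def num_nc_def nc_eq)
  from ub v consider
      i where "valence r s \<Delta> C v = 3" "i \<in> {1..r}" "c_mark C i = v"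
    | "valence r s \<Delta> C v = 3" "marks_at r s C v = {}"
    | i where "valence r s \<Delta> C v = 4" "i \<in> {r+1..r+s}" "c_mark C i = v"
    unfolding unoriented_broccoli_def by blast
  then show "(\<exists>i \<in> {1..r}. c_mark C i = v) \<and> num_nc \<Delta> C v = 2 \<and> all_outgoing \<Delta> C ori v \<or>
      marks_at r s C v = {} \<and> valence r s \<Delta> C v = 3 \<and> num_in \<Delta> C ori v = 2 \<and> num_out \<Delta> C ori v = 1 \<or>
      (\<exists>i \<in> {r+1..r+s}. c_mark C i = v) \<and> num_nc \<Delta> C v = 3 \<and> all_outgoing \<Delta> C ori v"
  proof cases
    case (1 i)
    then have "marks_at r s C v \<noteq> {}" using marked[of i] by auto
    then show ?thesis
      using 1 val card_marks_at_eq_1 marked_all_outgoing_iff_net_inflow[OF nc_eq _ fe] flow v by auto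
  next
    case 2
    then show ?thesis using unmarked_type_II_iff_net_inflow[OF nc_eq _ _ fe] flow v by blast
  next
    case (3 i)
    then have "marks_at r s C v \<noteq> {}" using marked[of i] by auto
    then show ?thesis
      using 3 val card_marks_at_eq_1 marked_all_outgoing_iff_net_inflow[OF nc_eq _ fe] flow v by auto
  qed
qed

theorem unoriented_broccoli_orientable:
  assumes ub: "unoriented_broccoli r s \<Delta> C" and dim: "r + 2 * s + card F + 1 = length \<Delta>"
  shows "\<exists>ori. oriented_broccoli r s \<Delta> C ori \<and> fixed_ends \<Delta> ori = F"
proof -
  have card_E: "card (c_edges C) + 2 = 2 * (r + s) + card F"
    by (rule unoriented_broccoli_card_edges[OF ub dim])
  define g where "g v = broccoli_inflow r s \<Delta> F C v" for v
  define h where "h e = (if (\<Sum>v\<in>side e (c_tgt C e). g v) = 1 then c_tgt C e else c_src C e)" for e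
  define ori :: orientation where "ori = (\<lambda>f. h f = c_tgt C f, \<lambda>j. j \<in> F)"
  have fe: "fixed_ends \<Delta> ori = F" using F_sub by (auto simp: fixed_ends_def ori_def)
  have "e_head C ori = h" by (auto simp: ori_def e_head_def h_def)
  then have "\<forall>v\<in>c_verts C. net_inflow (e_head C ori) v = broccoli_inflow r s \<Delta> F C v"
    using net_inflow_orient_by_side_sums[OF _ _ h_def] sum_broccoli_inflow_verts[OF card_E]
      side_sum_broccoli_inflow_unit[OF card_E] unfolding g_def by simp
  then have "oriented_broccoli r s \<Delta> C ori"
    using oriented_broccoli_if_net_inflow[OF ub non_contracted_if_card_edges[OF card_E] fe] by blast
  with fe show ?thesis by blast
qed

end

section \<open>Uniqueness of the orientation\<close>

locale curve_match =
  fixes r s :: nat and \<Delta> :: "(int \<times> int) list" and C D :: curve and \<phi> \<psi> :: "nat \<Rightarrow> nat"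
  assumes curve_C: "is_curve r s \<Delta> C" and curve_D: "is_curve r s \<Delta> D"
    and match: "graph_match r s \<Delta> C D \<phi> \<psi>"
begin

sublocale C: tree "c_verts C" "c_edges C" "c_src C" "c_tgt C" by (rule is_curve_tree[OF curve_C])
sublocale D: tree "c_verts D" "c_edges D" "c_src D" "c_tgt D" by (rule is_curve_tree[OF curve_D])

lemma \<phi>_eq_iff: "a \<in> c_verts C \<Longrightarrow> b \<in> c_verts C \<Longrightarrow> \<phi> a = \<phi> b \<longleftrightarrow> a = b"
  using match inj_on_eq_iff[of \<phi> "c_verts C"] unfolding graph_match_def bij_betw_def by blast

lemma \<psi>_ends: "f \<in> c_edges C \<Longrightarrow> {c_src D (\<psi> f), c_tgt D (\<psi> f)} = {\<phi> (c_src C f), \<phi> (c_tgt C f)}"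
  using match unfolding graph_match_def by auto

lemma \<psi>_incident_iff:
  assumes f: "f \<in> c_edges C" and v: "v \<in> c_verts C"
  shows "(c_src D (\<psi> f) = \<phi> v \<or> c_tgt D (\<psi> f) = \<phi> v) \<longleftrightarrow> (c_src C f = v \<or> c_tgt C f = v)"
proof -
  have "(c_src D (\<psi> f) = \<phi> v \<or> c_tgt D (\<psi> f) = \<phi> v) \<longleftrightarrow> (\<phi> (c_src C f) = \<phi> v \<or> \<phi> (c_tgt C f) = \<phi> v)"
    using \<psi>_ends[OF f] by (auto simp: doubleton_eq_iff)
  then show ?thesis using \<phi>_eq_iff[OF _ v] C.ends f by auto
qed

lemma card_edges_D: "card {g\<in>c_edges D. Q g} = card {f\<in>c_edges C. Q (\<psi> f)}"
proof -
  have bij: "bij_betw \<psi> (c_edges C) (c_edges D)" using match unfolding graph_match_def by blast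
  then have "{g\<in>c_edges D. Q g} = \<psi> ` {f\<in>c_edges C. Q (\<psi> f)}" by (auto simp: bij_betw_def)
  moreover have "inj_on \<psi> {f\<in>c_edges C. Q (\<psi> f)}"
    using bij by (auto simp: bij_betw_def intro: inj_on_subset)
  ultimately show ?thesis by (simp add: card_image)
qed

lemma broccoli_inflow_\<phi>:
  assumes v: "v \<in> c_verts C"
  shows "broccoli_inflow r s \<Delta> F D (\<phi> v) = broccoli_inflow r s \<Delta> F C v"
proof -
  have "card (edges_at D (\<phi> v)) = card (edges_at C v)"
    unfolding edges_at_def card_edges_D using \<psi>_incident_iff[OF _ v] by (metis (no_types, lifting))
  moreover have "marks_at r s D (\<phi> v) = marks_at r s C v"
    using match \<phi>_eq_iff[OF _ v] curve_C v unfolding graph_match_def marks_at_def is_curve_def by auto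
  moreover have "ends_at \<Delta> D (\<phi> v) = ends_at \<Delta> C v"
    using match \<phi>_eq_iff[OF _ v] curve_C v unfolding graph_match_def ends_at_def is_curve_def by auto
  ultimately show ?thesis by (simp add: broccoli_inflow_def)
qed

definition pullback_heads :: "(nat \<Rightarrow> nat) \<Rightarrow> nat \<Rightarrow> nat" where
  "pullback_heads h f = (if h (\<psi> f) = \<phi> (c_tgt C f) then c_tgt C f else c_src C f)"

lemma \<phi>_pullback_heads:
  assumes h: "\<forall>g\<in>c_edges D. h g = c_src D g \<or> h g = c_tgt D g" and f: "f \<in> c_edges C"
  shows "h (\<psi> f) = \<phi> (pullback_heads h f)"
proof -
  have "\<psi> f \<in> c_edges D" using match f unfolding graph_match_def bij_betw_def by blast
  then show ?thesis using h \<psi>_ends[OF f] by (auto simp: pullback_heads_def doubleton_eq_iff)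
qed

lemma net_inflow_pullback_heads:
  assumes h: "\<forall>g\<in>c_edges D. h g = c_src D g \<or> h g = c_tgt D g" and v: "v \<in> c_verts C"
  shows "C.net_inflow (pullback_heads h) v = D.net_inflow h (\<phi> v)"
proof -
  have head: "h (\<psi> f) = \<phi> v \<longleftrightarrow> pullback_heads h f = v" if f: "f \<in> c_edges C" for f
  proof -
    have "pullback_heads h f \<in> c_verts C" using C.ends f by (auto simp: pullback_heads_def)
    then show ?thesis using \<phi>_pullback_heads[OF h f] \<phi>_eq_iff[OF _ v] by simp
  qed
  have "{f\<in>c_edges C. h (\<psi> f) = \<phi> v} = {f\<in>c_edges C. pullback_heads h f = v}"
    using head by blast
  moreover have "{f\<in>c_edges C. (c_src D (\<psi> f) = \<phi> v \<or> c_tgt D (\<psi> f) = \<phi> v) \<and> h (\<psi> f) \<noteq> \<phi> v}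
     = {f\<in>c_edges C. (c_src C f = v \<or> c_tgt C f = v) \<and> pullback_heads h f \<noteq> v}"
    using head \<psi>_incident_iff[OF _ v] by blast
  ultimately show ?thesis unfolding C.net_inflow_def D.net_inflow_def card_edges_D by simp
qed

end

text \<open>The vertex types fix the net inflow at every vertex, and in a tree the net inflow
  determines the orientation.\<close>
theorem oriented_broccoli_or_iso:
  assumes C: "constrained_curve r s \<Delta> F P C" and D: "constrained_curve r s \<Delta> F P D"
    and ob_C: "oriented_broccoli r s \<Delta> C ori" "fixed_ends \<Delta> ori = F"
    and ob_D: "oriented_broccoli r s \<Delta> D ori'" "fixed_ends \<Delta> ori' = F"
    and iso: "curve_iso r s \<Delta> C D"
  shows "or_iso r s \<Delta> C ori D ori'"
proof -
  interpret C: constrained_curve r s \<Delta> F P C by (rule C)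
  interpret D: constrained_curve r s \<Delta> F P D by (rule D)
  obtain \<phi> \<psi> where gm: "graph_match r s \<Delta> C D \<phi> \<psi>"
    and len: "\<forall>e \<in> c_edges C. c_len D (\<psi> e) = c_len C e"
    and pos: "\<forall>v \<in> c_verts C. c_pos D (\<phi> v) = c_pos C v"
    using iso unfolding curve_iso_def by blast
  interpret M: curve_match r s \<Delta> C D \<phi> \<psi> using C.curve D.curve gm by unfold_locales
  have heads_D: "\<forall>g\<in>c_edges D. e_head D ori' g = c_src D g \<or> e_head D ori' g = c_tgt D g"
    by (auto simp: e_head_def)
  have "C.net_inflow (M.pullback_heads (e_head D ori')) v = C.net_inflow (e_head C ori) v"
    if v: "v \<in> c_verts C" for v
  proof -
    have "\<phi> v \<in> c_verts D" using gm v unfolding graph_match_def bij_betw_def by blast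
    then show ?thesis
      using M.net_inflow_pullback_heads[OF heads_D v] M.broccoli_inflow_\<phi>[OF v]
        D.oriented_broccoli_net_inflow[OF ob_D] C.oriented_broccoli_net_inflow[OF ob_C v] by simp
  qed
  moreover have "\<forall>f\<in>c_edges C. M.pullback_heads (e_head D ori') f = c_src C f \<or>
      M.pullback_heads (e_head D ori') f = c_tgt C f"
    "\<forall>f\<in>c_edges C. e_head C ori f = c_src C f \<or> e_head C ori f = c_tgt C f"
    by (auto simp: M.pullback_heads_def e_head_def)
  ultimately have "M.pullback_heads (e_head D ori') e = e_head C ori e" if "e \<in> c_edges C" for e
    using C.heads_eq_if_net_inflow_eq[OF _ _ _ that] by blast
  then have "\<forall>e\<in>c_edges C. e_head D ori' (\<psi> e) = \<phi> (e_head C ori e)"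
    using M.\<phi>_pullback_heads[OF heads_D] by simp
  moreover have "\<forall>j \<in> {1..length \<Delta>}. snd ori' j = snd ori j"
    using ob_C(2) ob_D(2) unfolding fixed_ends_def by blast
  ultimately show ?thesis unfolding or_iso_def using gm len pos by blast
qed

theorem lemma3p14:
  fixes r s :: nat and \<Delta> :: "(int \<times> int) list" and F :: "nat set"
    and P :: "(nat \<Rightarrow> real \<times> real) \<times> (nat \<Rightarrow> real \<times> real)"
  assumes "\<forall>v \<in> set \<Delta>. v \<noteq> 0"
    and "F \<subseteq> {1..length \<Delta>}"
    and "r + 2 * s + card F + 1 = length \<Delta>"
    and "gen_pos r s \<Delta> F P"
  shows "(\<forall>C ori. OrBroc r s \<Delta> F P C ori \<longrightarrow> UnBroc r s \<Delta> F P C)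
       \<and> (\<forall>C. UnBroc r s \<Delta> F P C \<longrightarrow> (\<exists>ori. OrBroc r s \<Delta> F P C ori))
       \<and> (\<forall>C ori D ori'. OrBroc r s \<Delta> F P C ori \<and> OrBroc r s \<Delta> F P D ori' \<and> curve_iso r s \<Delta> C D
              \<longrightarrow> or_iso r s \<Delta> C ori D ori')"
proof -
  have constrained: "constrained_curve r s \<Delta> F P C" if "is_curve r s \<Delta> C" "ev_eq r s \<Delta> F C P" for C
    using that assms(2,4) by unfold_locales
  have "UnBroc r s \<Delta> F P C" if "OrBroc r s \<Delta> F P C ori" for C ori
    using constrained_curve.oriented_broccoli_imp_unoriented[OF constrained] that
    unfolding OrBroc_def UnBroc_def by blast
  moreover have "\<exists>ori. OrBroc r s \<Delta> F P C ori" if "UnBroc r s \<Delta> F P C" for C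
    using constrained_curve.unoriented_broccoli_orientable[OF constrained _ assms(3)] that
    unfolding OrBroc_def UnBroc_def by blast
  moreover have "or_iso r s \<Delta> C ori D ori'"
    if "OrBroc r s \<Delta> F P C ori" "OrBroc r s \<Delta> F P D ori'" "curve_iso r s \<Delta> C D" for C ori D ori'
    using oriented_broccoli_or_iso[OF constrained constrained] that unfolding OrBroc_def by blast
  ultimately show ?thesis by blast
qed

end
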